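(* Let $p\in(1,2]$ and let $H:\mathbb{R}^d\to\mathbb{R}^d$ be non-expansive in the Euclidean norm, i.e. $\|H(x)-H(y)\|\le\|x-y\|$ for all $x,y$. Assume the set $\mathcal X=\{x: H(x)=x\}$ of fixed points is nonempty and bounded. Consider $x_{k+1}=x_k+\alpha_k(H(x_k)-x_k+w_k)$ with $\mathcal F_k=\sigma(x_0,\dots,x_k)$, and suppose that $\mathbb{E}[w_k\mid\mathcal F_k]=0$ a.s. and that there exist a point $\bar x\in\mathcal X$ and constants $A>0$, $B\ge0$ with $\mathbb{E}[\|w_k\|^p\mid\mathcal F_k]\le A+B\|x_k-\bar x\|^p$ a.s. for all $k$. If $(\alpha_k)$ is a positive decreasing sequence with $\sum_k\alpha_k=\infty$ and $\sum_k\alpha_k^p<\infty$, then $x_k$ converges almost surely to a (possibly random) point of $\mathcal X$.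
   Context: $\|\cdot\|$ is the Euclidean norm; $x_0$ is an initial point and $w_k$ are integrable random noise vectors. *)

theory Defs
  imports "HOL-Probability.Probability"
begin

definition nat_filtration ::
  "'a measure \<Rightarrow> (nat \<Rightarrow> 'a \<Rightarrow> 'b::topological_space) \<Rightarrow> nat \<Rightarrow> 'a measure" where
  "nat_filtration M x k =
     sigma (space M) (\<Union>i\<in>{..k}. {x i -` A \<inter> space M | A. A \<in> sets borel})"

end

theory Submission
  imports Defs
begin

(* Fix a fixed point z of H and use V_k = 1 + |x_k - z|^2 as Lyapunov function. Truncating the
   scaled noise alpha_k w_k at the level sqrt V_k, one step of the iteration gives
     V_{k+1} <= V_k (1 - alpha_k (1 - alpha_k) |x_k - H x_k|^2 / V_k + 2 d_k + O(theta_k)),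
   where theta_k = (alpha_k |w_k| / sqrt V_k)^p has E theta_k = O(alpha_k^p) by the conditional
   p-th moment bound, and d_k is a bounded cross term whose conditional mean is O(E theta_k)
   because the untruncated cross term is a martingale difference. Hence sum theta_k < oo and
   sum d_k converges almost surely (L^2 martingale convergence plus an absolutely summable
   compensator), and taking logarithms shows that |x_k - z| converges and
   sum alpha_k |x_k - H x_k|^2 < oo. Running this simultaneously for a countable dense set of
   fixed points, Opial's argument gives convergence to a fixed point. *)

section \<open>Perturbed averaged iterations\<close>

definition japanese_bracket :: "'a::real_normed_vector \<Rightarrow> real" where
  "japanese_bracket v = sqrt (1 + (norm v)\<^sup>2)"

lemma japanese_bracket_ge_one: "1 \<le> japanese_bracket v"
  by (simp add: japanese_bracket_def)

lemma power2_japanese_bracket: "(japanese_bracket v)\<^sup>2 = 1 + (norm v)\<^sup>2"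
  by (simp add: japanese_bracket_def add_nonneg_nonneg)

lemma norm_le_japanese_bracket: "norm v \<le> japanese_bracket v"
  unfolding japanese_bracket_def by (rule real_le_rsqrt) simp

definition cutoff :: "real \<Rightarrow> 'a::real_normed_vector \<Rightarrow> 'a" where
  "cutoff r W = (if norm W \<le> r then W else 0)"

lemma borel_measurable_cutoff [measurable]:
  fixes f :: "'a \<Rightarrow> 'b::{real_normed_vector, second_countable_topology}"
  assumes [measurable]: "r \<in> borel_measurable N" "f \<in> borel_measurable N"
  shows "(\<lambda>\<omega>. cutoff (r \<omega>) (f \<omega>)) \<in> borel_measurable N"
  unfolding cutoff_def by measurable

lemma power2_le_powr:
  fixes v p :: real
  assumes "0 \<le> v" and "v \<le> 1" and "p \<le> 2"
  shows "v\<^sup>2 \<le> v powr p"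
proof (cases "v = 0")
  case False
  then have "v powr 2 \<le> v powr p" using assms by (intro powr_mono') auto
  then show ?thesis using False assms by (simp add: powr_numeral)
qed (use assms in auto)

lemma le_powr_if_one_le:
  fixes u p :: real
  assumes "1 \<le> u" and "1 \<le> p"
  shows "u \<le> u powr p"
  using powr_mono[OF assms(2) assms(1)] assms(1) by simp

lemma cutoff_ratio_power2_le:
  assumes "0 < \<rho>" and "p \<le> 2"
  shows "(norm (cutoff \<rho> W) / \<rho>)\<^sup>2 \<le> (norm W / \<rho>) powr p"
  using assms power2_le_powr[of "norm W / \<rho>" p] by (auto simp: cutoff_def)

lemma cutoff_remainder_ratio_le:
  assumes "0 < \<rho>" and "1 \<le> p"
  shows "norm (W - cutoff \<rho> W) / \<rho> \<le> (norm W / \<rho>) powr p"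
  using assms le_powr_if_one_le[of "norm W / \<rho>" p] by (auto simp: cutoff_def)

lemma norm_convex_comb_power2:
  fixes a b :: "'v::real_inner"
  shows "(norm ((1 - t) *\<^sub>R a + t *\<^sub>R b))\<^sup>2
           = (1 - t) * (norm a)\<^sup>2 + t * (norm b)\<^sup>2 - t * (1 - t) * (norm (a - b))\<^sup>2"
  by (simp add: power2_norm_eq_inner inner_add_left inner_add_right inner_diff_left
      inner_diff_right inner_commute algebra_simps)

lemma averaged_step_dist_power2:
  fixes x y z :: "'v::real_inner"
  assumes "norm (y - z) \<le> norm (x - z)" and "0 \<le> a"
  shows "(norm (x + a *\<^sub>R (y - x) - z))\<^sup>2 \<le> (norm (x - z))\<^sup>2 - a * (1 - a) * (norm (x - y))\<^sup>2"
proof -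
  have "x + a *\<^sub>R (y - x) - z = (1 - a) *\<^sub>R (x - z) + a *\<^sub>R (y - z)"
    by (simp add: algebra_simps)
  then have "(norm (x + a *\<^sub>R (y - x) - z))\<^sup>2
      = (1 - a) * (norm (x - z))\<^sup>2 + a * (norm (y - z))\<^sup>2 - a * (1 - a) * (norm (x - y))\<^sup>2"
    by (simp add: norm_convex_comb_power2)
  moreover have "a * (norm (y - z))\<^sup>2 \<le> a * (norm (x - z))\<^sup>2"
    using assms by (intro mult_left_mono power_mono) auto
  ultimately show ?thesis by (simp add: algebra_simps)
qed

lemma averaged_step_dist_le:
  fixes x y z :: "'v::real_normed_vector"
  assumes "norm (y - z) \<le> norm (x - z)" and "0 \<le> a"
  shows "norm (x + a *\<^sub>R (y - x) - z) \<le> (1 + 2 * a) * norm (x - z)"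
proof -
  have "x + a *\<^sub>R (y - x) - z = (1 - a) *\<^sub>R (x - z) + a *\<^sub>R (y - z)"
    by (simp add: algebra_simps)
  then have "norm (x + a *\<^sub>R (y - x) - z) \<le> \<bar>1 - a\<bar> * norm (x - z) + a * norm (y - z)"
    using norm_triangle_ineq[of "(1 - a) *\<^sub>R (x - z)" "a *\<^sub>R (y - z)"] assms(2) by simp
  also have "\<dots> \<le> (\<bar>1 - a\<bar> + a) * norm (x - z)"
    using assms by (simp add: distrib_right mult_left_mono)
  also have "\<dots> \<le> (1 + 2 * a) * norm (x - z)"
    using assms(2) by (intro mult_right_mono) auto
  finally show ?thesis .
qed

text \<open>The noise is split at the level \<open>\<rho>\<close>: the part below it enters through the cross term and
  through \<open>(|e|/\<rho>)\<^sup>2 \<le> \<theta>\<close>, the part above it only through \<open>|W - e|/\<rho> \<le> \<theta>\<close>, since that ratio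
  exceeds \<open>1\<close>. This is what makes a \<open>p\<close>-th moment with \<open>p < 2\<close> sufficient.\<close>

lemma norm_add_noise_power2_le:
  fixes v W :: "'v::real_inner" and \<rho> L p :: real
  defines "\<theta> \<equiv> (norm W / \<rho>) powr p"
  assumes "norm v \<le> L * \<rho>" and "0 < \<rho>" and "1 \<le> L" and "1 < p" and "p \<le> 2"
  shows "(norm (v + W))\<^sup>2 \<le> (norm v)\<^sup>2 + 2 * inner v (cutoff \<rho> W) + \<rho>\<^sup>2 * ((2 * L + 3) * \<theta> + \<theta>\<^sup>2)"
proof -
  define e where "e = cutoff \<rho> W"
  define s where "s = norm e / \<rho>"
  define t where "t = norm (W - e) / \<rho>"
  have s: "0 \<le> s" "s \<le> 1" "s\<^sup>2 \<le> \<theta>"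
    using assms cutoff_ratio_power2_le[of \<rho> p W] by (auto simp: s_def e_def cutoff_def)
  have t: "0 \<le> t" "t \<le> \<theta>"
    using assms cutoff_remainder_ratio_le[of \<rho> p W] by (auto simp: t_def e_def)
  have "norm (v + e) \<le> L * \<rho> + \<rho> * s"
    using norm_triangle_ineq[of v e] assms(2,3) by (simp add: s_def)
  also have "\<dots> \<le> \<rho> * (L + 1)" using s assms(3) by (simp add: algebra_simps)
  finally have ve_le: "norm (v + e) \<le> \<rho> * (L + 1)" .
  have ve_sq: "(norm (v + e))\<^sup>2 = (norm v)\<^sup>2 + 2 * inner v e + \<rho>\<^sup>2 * s\<^sup>2"
    using assms(3) by (simp add: power2_norm_eq_inner inner_add_left inner_add_right inner_commute
        s_def power_divide)
  have "norm (v + W) \<le> norm (v + e) + \<rho> * t"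
    using norm_triangle_ineq[of "v + e" "W - e"] assms(3) by (simp add: t_def algebra_simps)
  then have "(norm (v + W))\<^sup>2 \<le> (norm (v + e) + \<rho> * t)\<^sup>2"
    by (intro power_mono) auto
  also have "\<dots> = (norm (v + e))\<^sup>2 + 2 * norm (v + e) * (\<rho> * t) + \<rho>\<^sup>2 * t\<^sup>2"
    by (simp add: power2_sum power_mult_distrib)
  also have "\<dots> \<le> (norm (v + e))\<^sup>2 + 2 * (\<rho> * (L + 1)) * (\<rho> * t) + \<rho>\<^sup>2 * t\<^sup>2"
    using ve_le t assms(3) by (intro add_mono mult_right_mono mult_left_mono) auto
  also have "\<dots> = (norm v)\<^sup>2 + 2 * inner v e + \<rho>\<^sup>2 * (s\<^sup>2 + 2 * (L + 1) * t + t\<^sup>2)"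
    unfolding ve_sq by (simp add: power2_eq_square algebra_simps)
  also have "\<dots> \<le> (norm v)\<^sup>2 + 2 * inner v e + \<rho>\<^sup>2 * ((2 * L + 3) * \<theta> + \<theta>\<^sup>2)"
  proof -
    have "s\<^sup>2 + 2 * (L + 1) * t + t\<^sup>2 \<le> (2 * L + 3) * \<theta> + \<theta>\<^sup>2"
      using s power_mono[OF t(2,1), of 2] mult_left_mono[OF t(2), of "2 * (L + 1)"] assms(4)
      by (simp add: algebra_simps)
    then show ?thesis by (simp add: mult_left_mono)
  qed
  finally show ?thesis by (simp add: e_def)
qed

lemma japanese_bracket_averaged_step:
  fixes x y z W :: "'v::real_inner" and a L p :: real
  defines "\<rho> \<equiv> japanese_bracket (x - z)" and "\<theta> \<equiv> (norm W / japanese_bracket (x - z)) powr p"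
    and "x' \<equiv> x + a *\<^sub>R (y - x)"
  assumes "norm (y - z) \<le> norm (x - z)" and "0 \<le> a" and "1 + 2 * a \<le> L" and "1 < p" and "p \<le> 2"
  shows "(japanese_bracket (x' + W - z))\<^sup>2 \<le> \<rho>\<^sup>2 - a * (1 - a) * (norm (x - y))\<^sup>2
           + 2 * inner (x' - z) (cutoff \<rho> W) + \<rho>\<^sup>2 * ((2 * L + 3) * \<theta> + \<theta>\<^sup>2)"
proof -
  have "norm (x' - z) \<le> (1 + 2 * a) * norm (x - z)"
    unfolding x'_def by (rule averaged_step_dist_le[OF assms(4,5)])
  also have "\<dots> \<le> L * \<rho>"
    using assms norm_le_japanese_bracket[of "x - z"] by (intro mult_mono) (auto simp: \<rho>_def)
  finally have "(norm (x' - z + W))\<^sup>2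
      \<le> (norm (x' - z))\<^sup>2 + 2 * inner (x' - z) (cutoff \<rho> W) + \<rho>\<^sup>2 * ((2 * L + 3) * \<theta> + \<theta>\<^sup>2)"
    unfolding \<theta>_def \<rho>_def using japanese_bracket_ge_one[of "x - z"] assms(5-8)
    by (intro norm_add_noise_power2_le) auto
  moreover have "(norm (x' - z))\<^sup>2 \<le> (norm (x - z))\<^sup>2 - a * (1 - a) * (norm (x - y))\<^sup>2"
    unfolding x'_def by (rule averaged_step_dist_power2[OF assms(4,5)])
  ultimately show ?thesis
    by (simp add: \<rho>_def power2_japanese_bracket algebra_simps)
qed

lemma deterministic_robbins_siegmund:
  fixes b D u :: "nat \<Rightarrow> real"
  assumes nonneg: "\<And>k. 0 \<le> b k" and descent: "\<And>k. b (Suc k) \<le> b k - D k + u k"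
    and "eventually (\<lambda>k. 0 \<le> D k) sequentially" and "convergent (\<lambda>n. \<Sum>k<n. u k)"
  shows "convergent b" and "summable D"
proof -
  define U where "U n = (\<Sum>k<n. u k)" for n
  define c where "c n = b n - U n" for n
  obtain K where K: "\<And>k. K \<le> k \<Longrightarrow> 0 \<le> D k"
    using assms(3) by (auto simp: eventually_sequentially)
  obtain BU where BU: "\<And>n. \<bar>U n\<bar> \<le> BU"
    using convergent_imp_Bseq[OF assms(4)] by (auto simp: Bseq_def U_def)
  have c_step: "c (Suc n) \<le> c n - D n" for n
    using descent[of n] by (simp add: c_def U_def)
  have c_lower: "- BU \<le> c n" for n
    using nonneg[of n] BU[of n] by (simp add: c_def)
  have c_dec: "c n \<le> c m" if "K \<le> m" "m \<le> n" for m n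
    using that(2)
  proof (induction n rule: dec_induct)
    case (step n)
    then show ?case using c_step[of n] K[of n] that(1) by simp
  qed simp
  have "convergent c"
  proof (rule Bseq_monoseq_convergent'_dec[where M = K])
    show "Bseq (\<lambda>n. c (n + K))"
    proof (rule BseqI')
      show "norm (c (n + K)) \<le> max \<bar>c K\<bar> BU" for n
        using c_dec[of K "n + K"] c_lower[of "n + K"] by simp
    qed
  qed (use c_dec in auto)
  then have "convergent (\<lambda>n. c n + U n)"
    using assms(4) by (intro convergent_add) (simp_all add: U_def)
  then show "convergent b" by (simp add: c_def)
  have D_partial: "(\<Sum>k<n. D (k + K)) \<le> c K - c (n + K)" for n
  proof (induction n)
    case (Suc n)
    then show ?case using c_step[of "n + K"] by simp
  qed simp
  have "summable (\<lambda>k. D (k + K))"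
  proof (rule summableI_nonneg_bounded)
    show "(\<Sum>k<n. D (k + K)) \<le> c K + BU" for n
      using D_partial[of n] c_lower[of "n + K"] by linarith
  qed (use K in simp)
  then show "summable D" by (simp add: summable_iff_shift)
qed

lemma deterministic_robbins_siegmund_mult:
  fixes q D u :: "nat \<Rightarrow> real"
  assumes "\<And>k. 1 \<le> q k" and "\<And>k. q (Suc k) \<le> q k * (1 - D k + u k)"
    and "eventually (\<lambda>k. 0 \<le> D k) sequentially" and "convergent (\<lambda>n. \<Sum>k<n. u k)"
  shows "convergent q" and "summable D"
proof -
  have ln_descent: "ln (q (Suc k)) \<le> ln (q k) - D k + u k" for k
  proof -
    have q: "0 < q k" "0 < q (Suc k)" using assms(1)[of k] assms(1)[of "Suc k"] by linarith+
    then have "0 < q k * (1 - D k + u k)" using assms(2)[of k] by linarith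
    then have t: "0 < 1 - D k + u k" using q(1) by (simp add: zero_less_mult_iff)
    have "ln (q (Suc k)) \<le> ln (q k * (1 - D k + u k))"
      using assms(2) q t by simp
    also have "\<dots> = ln (q k) + ln (1 - D k + u k)" using q t by (simp add: ln_mult)
    also have "\<dots> \<le> ln (q k) + (- D k + u k)" using ln_le_minus_one[OF t] by simp
    finally show ?thesis by simp
  qed
  have ln_nonneg: "0 \<le> ln (q k)" for k using assms(1)[of k] by simp
  note rs = deterministic_robbins_siegmund[OF ln_nonneg ln_descent assms(3,4)]
  then show "summable D" by blast
  have "(\<lambda>k. exp (ln (q k))) \<longlonglongrightarrow> exp (lim (\<lambda>k. ln (q k)))"
    using rs(1) by (intro tendsto_exp) (simp add: convergent_LIMSEQ_iff)
  moreover have "exp (ln (q k)) = q k" for k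
    using assms(1)[of k] by simp
  ultimately show "convergent q" by (auto simp: convergent_def)
qed

lemma summable_power2_if_summable:
  fixes f :: "nat \<Rightarrow> real"
  assumes "summable f" and "\<And>k. 0 \<le> f k"
  shows "summable (\<lambda>k. (f k)\<^sup>2)"
proof (rule summable_comparison_test_ev[OF _ assms(1)])
  have "eventually (\<lambda>k. f k < 1) sequentially"
    using summable_LIMSEQ_zero[OF assms(1)] by (rule order_tendstoD) simp
  then show "eventually (\<lambda>k. norm ((f k)\<^sup>2) \<le> f k) sequentially"
    by eventually_elim (use assms(2) in \<open>simp add: power2_eq_square mult_left_le_one_le\<close>)
qed

lemma summable_from_damped_normalised:
  fixes a r q :: "nat \<Rightarrow> real"
  assumes "summable (\<lambda>k. a k * (1 - a k) * r k / q k)" and "a \<longlonglongrightarrow> 0"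
    and "\<And>k. 0 \<le> a k" and "\<And>k. 0 \<le> r k" and "\<And>k. 0 < q k" and "\<And>k. q k \<le> Q"
  shows "summable (\<lambda>k. a k * r k)"
proof (rule summable_comparison_test_ev)
  show "summable (\<lambda>k. 2 * Q * (a k * (1 - a k) * r k / q k))"
    using assms(1) by (rule summable_mult)
  have "eventually (\<lambda>k. a k < 1/2) sequentially" using assms(2) by (rule order_tendstoD) simp
  then show "eventually (\<lambda>k. norm (a k * r k) \<le> 2 * Q * (a k * (1 - a k) * r k / q k)) sequentially"
  proof eventually_elim
    case (elim k)
    have "a k * r k \<le> 2 * (1 - a k) * (a k * r k)"
      using elim assms(3,4)[of k] by (intro mult_le_cancel_right1[THEN iffD2]) (simp add: not_less)
    also have "\<dots> = 2 * q k * (a k * (1 - a k) * r k / q k)"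
      using assms(5)[of k] by simp
    also have "\<dots> \<le> 2 * Q * (a k * (1 - a k) * r k / q k)"
      using elim assms(3-6)[of k] by (intro mult_right_mono) auto
    finally show ?case using assms(3,4)[of k] by simp
  qed
qed

lemma perturbed_km_convergent:
  fixes xs W :: "nat \<Rightarrow> 'v::real_inner" and H :: "'v \<Rightarrow> 'v" and z :: 'v
    and \<alpha> :: "nat \<Rightarrow> real" and p L :: real
  defines "\<rho> \<equiv> \<lambda>k. japanese_bracket (xs k - z)"
  assumes Hz: "\<And>k. norm (H (xs k) - z) \<le> norm (xs k - z)"
    and \<alpha>: "\<And>k. 0 < \<alpha> k" "\<And>k. 1 + 2 * \<alpha> k \<le> L" "\<alpha> \<longlonglongrightarrow> 0"
    and p: "1 < p" "p \<le> 2"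
    and step: "\<And>k. xs (Suc k) = xs k + \<alpha> k *\<^sub>R (H (xs k) - xs k) + W k"
    and noise: "summable (\<lambda>k. (norm (W k) / \<rho> k) powr p)"
    and cross: "convergent (\<lambda>n. \<Sum>k<n.
                  inner (xs k + \<alpha> k *\<^sub>R (H (xs k) - xs k) - z) (cutoff (\<rho> k) (W k)) / (\<rho> k)\<^sup>2)"
  shows "convergent (\<lambda>k. norm (xs k - z))"
    and "summable (\<lambda>k. \<alpha> k * (norm (xs k - H (xs k)))\<^sup>2)"
proof -
  define \<theta> where "\<theta> k = (norm (W k) / \<rho> k) powr p" for k
  define d where "d k = inner (xs k + \<alpha> k *\<^sub>R (H (xs k) - xs k) - z) (cutoff (\<rho> k) (W k)) / (\<rho> k)\<^sup>2"
    for k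
  define D where "D k = \<alpha> k * (1 - \<alpha> k) * (norm (xs k - H (xs k)))\<^sup>2 / (\<rho> k)\<^sup>2" for k
  define u where "u k = 2 * d k + (2 * L + 3) * \<theta> k + (\<theta> k)\<^sup>2" for k
  have \<rho>: "1 \<le> \<rho> k" for k by (simp add: \<rho>_def japanese_bracket_ge_one)
  have q_step: "(\<rho> (Suc k))\<^sup>2 \<le> (\<rho> k)\<^sup>2 * (1 - D k + u k)" for k
  proof -
    have "(\<rho> (Suc k))\<^sup>2 \<le> (\<rho> k)\<^sup>2 - \<alpha> k * (1 - \<alpha> k) * (norm (xs k - H (xs k)))\<^sup>2
        + 2 * ((\<rho> k)\<^sup>2 * d k) + (\<rho> k)\<^sup>2 * ((2 * L + 3) * \<theta> k + (\<theta> k)\<^sup>2)"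
      (is "_ \<le> ?rhs")
      using japanese_bracket_averaged_step[OF Hz[of k] less_imp_le[OF \<alpha>(1)] \<alpha>(2) p, where W = "W k"] \<rho>[of k]
      by (simp add: \<rho>_def step \<theta>_def d_def)
    also have "?rhs = (\<rho> k)\<^sup>2 * (1 - D k + u k)"
      using \<rho>[of k] by (simp add: D_def u_def field_simps)
    finally show ?thesis .
  qed
  have "summable \<theta>" using noise by (simp add: \<theta>_def[abs_def])
  then have "convergent (\<lambda>n. 2 * (\<Sum>k<n. d k) + (2 * L + 3) * (\<Sum>k<n. \<theta> k) + (\<Sum>k<n. (\<theta> k)\<^sup>2))"
    using cross summable_power2_if_summable[of \<theta>]
    by (intro convergent_add convergent_mult convergent_const)
      (simp_all add: d_def \<theta>_def summable_iff_convergent)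
  then have u_conv: "convergent (\<lambda>n. \<Sum>k<n. u k)"
    by (simp add: u_def sum.distrib sum_distrib_left)
  have "eventually (\<lambda>k. \<alpha> k < 1) sequentially" using \<alpha>(3) by (rule order_tendstoD) simp
  then have "eventually (\<lambda>k. 0 \<le> D k) sequentially"
    by eventually_elim (use \<alpha>(1) in \<open>simp add: D_def less_imp_le\<close>)
  note rs = deterministic_robbins_siegmund_mult[of "\<lambda>k. (\<rho> k)\<^sup>2", OF _ q_step this u_conv]
  have q_conv: "convergent (\<lambda>k. (\<rho> k)\<^sup>2)" and "summable D"
    using rs \<rho> by (auto simp: one_le_power)
  have "(\<lambda>k. sqrt ((\<rho> k)\<^sup>2 - 1)) \<longlonglongrightarrow> sqrt (lim (\<lambda>k. (\<rho> k)\<^sup>2) - 1)"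
    using q_conv by (intro tendsto_real_sqrt tendsto_diff tendsto_const) (simp add: convergent_LIMSEQ_iff)
  then show "convergent (\<lambda>k. norm (xs k - z))"
    by (auto simp: convergent_def \<rho>_def power2_japanese_bracket)
  obtain Q where "\<And>k. (\<rho> k)\<^sup>2 \<le> Q"
    using convergent_imp_Bseq[OF q_conv] by (auto simp: Bseq_def)
  moreover have "0 < (\<rho> k)\<^sup>2" for k using \<rho>[of k] by simp
  ultimately show "summable (\<lambda>k. \<alpha> k * (norm (xs k - H (xs k)))\<^sup>2)"
    using \<open>summable D\<close> \<alpha>(1,3)
    by (intro summable_from_damped_normalised[where q = "\<lambda>k. (\<rho> k)\<^sup>2"])
      (auto simp: D_def[abs_def] less_imp_le)
qed

lemma frequently_less_if_weighted_summable:
  fixes \<alpha> r :: "nat \<Rightarrow> real"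
  assumes "summable (\<lambda>k. \<alpha> k * r k)" and "\<And>k. 0 \<le> \<alpha> k" and "\<not> summable \<alpha>" and "0 < e"
  shows "\<exists>\<^sub>F k in sequentially. r k < e"
proof (rule ccontr)
  assume "\<not> ?thesis"
  then have "eventually (\<lambda>k. e \<le> r k) sequentially" by (simp add: not_frequently not_less)
  then have "eventually (\<lambda>k. norm (\<alpha> k) \<le> \<alpha> k * r k / e) sequentially"
  proof eventually_elim
    case (elim k)
    then have "e * \<alpha> k \<le> \<alpha> k * r k"
      using mult_right_mono[OF elim assms(2)[of k]] by (simp add: mult.commute)
    then show ?case using assms(2)[of k] assms(4) by (simp add: field_simps)
  qed
  then have "summable \<alpha>"
    using summable_divide[OF assms(1)] by (rule summable_comparison_test_ev)
  with assms(3) show False ..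
qed

lemma fixpoint_cluster_point:
  fixes xs :: "nat \<Rightarrow> 'v::heine_borel" and H :: "'v \<Rightarrow> 'v"
  assumes "continuous_on UNIV H" and "bounded (range xs)"
    and residual: "\<And>e. 0 < e \<Longrightarrow> \<exists>\<^sub>F k in sequentially. dist (xs k) (H (xs k)) < e"
  obtains y \<sigma> where "H y = y" and "filterlim \<sigma> sequentially sequentially" and "(\<lambda>n. xs (\<sigma> n)) \<longlonglongrightarrow> y"
proof -
  define r where "r k = dist (xs k) (H (xs k))" for k
  have "\<forall>n. \<exists>k\<ge>n. r k < 1 / Suc n"
    using residual[of "1 / Suc _"] by (simp add: r_def frequently_sequentially)
  then obtain \<kappa> where \<kappa>: "\<And>n. n \<le> \<kappa> n" "\<And>n. r (\<kappa> n) < 1 / Suc n" by metis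
  have "(\<lambda>n. r (\<kappa> n)) \<longlonglongrightarrow> 0"
  proof (rule tendsto_sandwich[of "\<lambda>_. 0" _ _ "\<lambda>n. 1 / Suc n"])
    show "(\<lambda>n. 1 / real (Suc n)) \<longlonglongrightarrow> 0" by (rule LIMSEQ_Suc[OF lim_inverse_n'])
  qed (use \<kappa>(2) in \<open>auto simp: r_def less_imp_le\<close>)
  have "bounded (range (xs \<circ> \<kappa>))"
    using assms(2) by (rule bounded_subset) auto
  then obtain \<tau> y where \<tau>: "strict_mono \<tau>" and y: "(xs \<circ> \<kappa> \<circ> \<tau>) \<longlonglongrightarrow> y"
    using bounded_imp_convergent_subsequence by blast
  have "(\<lambda>n. r ((\<kappa> \<circ> \<tau>) n)) \<longlonglongrightarrow> 0"
    using LIMSEQ_subseq_LIMSEQ[OF \<open>(\<lambda>n. r (\<kappa> n)) \<longlonglongrightarrow> 0\<close> \<tau>] by (simp add: o_def)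
  moreover have "(\<lambda>n. r ((\<kappa> \<circ> \<tau>) n)) \<longlonglongrightarrow> dist y (H y)"
    unfolding r_def using y continuous_on_tendsto_compose[OF assms(1) y]
    by (intro tendsto_dist) (auto simp: o_def)
  ultimately have "H y = y" using LIMSEQ_unique by fastforce
  moreover have "filterlim (\<kappa> \<circ> \<tau>) sequentially sequentially"
    using filterlim_compose[OF filterlim_at_top_mono[OF filterlim_ident] filterlim_subseq[OF \<tau>]] \<kappa>(1)
    by (simp add: o_def)
  ultimately show ?thesis
    using y that by (simp add: o_def)
qed

lemma LIMSEQ_if_dist_convergent_on_dense:
  fixes xs :: "nat \<Rightarrow> 'v::metric_space"
  assumes "y \<in> closure Z" and dist_conv: "\<And>z. z \<in> Z \<Longrightarrow> convergent (\<lambda>k. dist (xs k) z)"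
    and \<sigma>: "filterlim \<sigma> sequentially sequentially" and y: "(\<lambda>n. xs (\<sigma> n)) \<longlonglongrightarrow> y"
  shows "xs \<longlonglongrightarrow> y"
proof (rule metric_LIMSEQ_I)
  fix e :: real assume "0 < e"
  then obtain z where z: "z \<in> Z" "dist z y < e / 2"
    using assms(1) unfolding closure_approachable by (meson half_gt_zero)
  obtain l where l: "(\<lambda>k. dist (xs k) z) \<longlonglongrightarrow> l"
    using dist_conv[OF z(1)] by (auto simp: convergent_def)
  have "(\<lambda>n. dist (xs (\<sigma> n)) z) \<longlonglongrightarrow> l"
    using filterlim_compose[OF l \<sigma>] by simp
  moreover have "(\<lambda>n. dist (xs (\<sigma> n)) z) \<longlonglongrightarrow> dist y z"
    using y by (intro tendsto_dist tendsto_const)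
  ultimately have "l < e / 2" using z(2) LIMSEQ_unique by (fastforce simp: dist_commute)
  then have "eventually (\<lambda>k. dist (xs k) z < e / 2) sequentially"
    by (rule order_tendstoD(2)[OF l])
  then obtain N where N: "\<And>k. N \<le> k \<Longrightarrow> dist (xs k) z < e / 2"
    unfolding eventually_sequentially by blast
  show "\<exists>N. \<forall>k\<ge>N. dist (xs k) y < e"
  proof (intro exI allI impI)
    fix k assume "N \<le> k"
    have "dist (xs k) y \<le> dist (xs k) z + dist z y" by (rule dist_triangle)
    then show "dist (xs k) y < e" using N[OF \<open>N \<le> k\<close>] z(2) by linarith
  qed
qed

lemma opial_convergent:
  fixes xs :: "nat \<Rightarrow> 'v::heine_borel" and H :: "'v \<Rightarrow> 'v"
  assumes "continuous_on UNIV H" and "{y. H y = y} \<subseteq> closure Z" and "Z \<noteq> {}"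
    and dist_conv: "\<And>z. z \<in> Z \<Longrightarrow> convergent (\<lambda>k. dist (xs k) z)"
    and "\<And>e. 0 < e \<Longrightarrow> \<exists>\<^sub>F k in sequentially. dist (xs k) (H (xs k)) < e"
  shows "\<exists>y. H y = y \<and> xs \<longlonglongrightarrow> y"
proof -
  obtain z0 where "z0 \<in> Z" using assms(3) by blast
  obtain c where "\<And>k. dist (xs k) z0 \<le> c"
    using convergent_imp_Bseq[OF dist_conv[OF \<open>z0 \<in> Z\<close>]] by (auto simp: Bseq_def)
  then have "bounded (range xs)"
    unfolding bounded_def by (intro exI[of _ z0] exI[of _ c]) (auto simp: dist_commute)
  then obtain y \<sigma> where "H y = y" "filterlim \<sigma> sequentially sequentially" "(\<lambda>n. xs (\<sigma> n)) \<longlonglongrightarrow> y"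
    using fixpoint_cluster_point[OF assms(1) _ assms(5)] by blast
  moreover have "y \<in> closure Z" using assms(2) \<open>H y = y\<close> by blast
  ultimately show ?thesis
    using LIMSEQ_if_dist_convergent_on_dense[OF _ dist_conv] by blast
qed

section \<open>Martingale differences\<close>

lemma AE_summable_if_nn_integral_le:
  fixes g :: "nat \<Rightarrow> 'a \<Rightarrow> real" and c :: "nat \<Rightarrow> real"
  assumes "\<And>k. g k \<in> borel_measurable M" and "\<And>k x. 0 \<le> g k x"
    and "\<And>k. (\<integral>\<^sup>+x. g k x \<partial>M) \<le> ennreal (c k)" and "summable c" and "\<And>k. 0 \<le> c k"
  shows "AE x in M. summable (\<lambda>k. g k x)"
proof -
  have "(\<integral>\<^sup>+x. (\<Sum>k. ennreal (g k x)) \<partial>M) = (\<Sum>k. \<integral>\<^sup>+x. g k x \<partial>M)"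
    by (rule nn_integral_suminf) (use assms(1) in auto)
  also have "\<dots> \<le> (\<Sum>k. ennreal (c k))"
    by (intro suminf_le assms(3)) auto
  also have "\<dots> < \<top>"
    using ennreal_suminf_neq_top[OF assms(4,5)] by (simp add: top.not_eq_extremum)
  finally have "(\<integral>\<^sup>+x. (\<Sum>k. ennreal (g k x)) \<partial>M) \<noteq> \<infinity>" by simp
  then have "AE x in M. (\<Sum>k. ennreal (g k x)) \<noteq> \<infinity>"
    by (intro nn_integral_PInf_AE) (use assms(1) in auto)
  then show ?thesis
    by eventually_elim (rule summable_suminf_not_top, use assms(2) in auto)
qed

lemma space_nat_filtration [simp]: "space (nat_filtration M x k) = space M"
  unfolding nat_filtration_def by (rule space_measure_of_conv)

lemma sets_nat_filtration:
  "sets (nat_filtration M x k) = sigma_sets (space M) (\<Union>i\<in>{..k}. {x i -` A \<inter> space M | A. A \<in> sets borel})"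
  unfolding nat_filtration_def by (rule sets_measure_of) auto

lemma subalgebra_nat_filtration:
  assumes "\<And>i. x i \<in> borel_measurable M"
  shows "subalgebra M (nat_filtration M x k)"
  unfolding subalgebra_def sets_nat_filtration
  using assms by (auto intro!: sets.sigma_sets_subset measurable_sets)

lemma subalgebra_nat_filtration_mono:
  "j \<le> k \<Longrightarrow> subalgebra (nat_filtration M x k) (nat_filtration M x j)"
  unfolding subalgebra_def sets_nat_filtration by (intro conjI sigma_sets_mono') fastforce+

lemma measurable_nat_filtration:
  assumes "j \<le> k"
  shows "x j \<in> borel_measurable (nat_filtration M x k)"
proof (rule measurableI)
  fix A :: "'b set" assume "A \<in> sets borel"
  then show "x j -` A \<inter> space (nat_filtration M x k) \<in> sets (nat_filtration M x k)"
    unfolding sets_nat_filtration using assms by (auto intro: sigma_sets.Basic)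
qed simp

lemma (in prob_space) sigma_finite_subalgebra_of_subalgebra:
  "subalgebra M N \<Longrightarrow> sigma_finite_subalgebra M N"
  by (intro finite_measure_subalgebra_is_sigma_finite)
    (simp add: finite_measure_subalgebra_def finite_measure_subalgebra_axioms_def finite_measure_axioms)

(* The orthogonality assumption is E[f k | F k] = 0, phrased without conditional expectations. *)
locale martingale_differences = prob_space M for M :: "'a measure" +
  fixes F :: "nat \<Rightarrow> 'a measure" and f :: "nat \<Rightarrow> 'a \<Rightarrow> real"
  assumes subalgebra: "\<And>k. subalgebra M (F k)"
    and measurable_later: "\<And>j k. j < k \<Longrightarrow> f j \<in> borel_measurable (F k)"
    and integrable_square: "\<And>k. integrable M (\<lambda>\<omega>. (f k \<omega>)\<^sup>2)"
    and orthogonal: "\<And>k g B. g \<in> borel_measurable (F k) \<Longrightarrow> (\<And>\<omega>. \<omega> \<in> space M \<Longrightarrow> \<bar>g \<omega>\<bar> \<le> B)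
                       \<Longrightarrow> (\<integral>\<omega>. g \<omega> * f k \<omega> \<partial>M) = 0"
begin

abbreviation partial_sum :: "nat \<Rightarrow> 'a \<Rightarrow> real" where
  "partial_sum n \<omega> \<equiv> \<Sum>k<n. f k \<omega>"

lemma measurable_from_F: "g \<in> borel_measurable (F k) \<Longrightarrow> g \<in> borel_measurable M"
  by (rule measurable_from_subalg[OF subalgebra])

lemma borel_measurable_f [measurable]: "f k \<in> borel_measurable M"
  using measurable_later[of k "Suc k"] by (simp add: measurable_from_F)

lemma integrable_f: "integrable M (f k)"
  by (rule square_integrable_imp_integrable) (simp_all add: integrable_square)

lemma partial_sum_measurable_F: "j \<le> k \<Longrightarrow> partial_sum j \<in> borel_measurable (F k)"
  by (intro borel_measurable_sum measurable_later) auto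

(* The increments from m on, switched off once the partial sums leave the epsilon-band around
   partial_sum m. Orthogonality makes their second moments add up, and Markov's inequality for
   the stopped sum yields Kolmogorov's maximal inequality. *)
definition stays_close :: "nat \<Rightarrow> real \<Rightarrow> nat \<Rightarrow> 'a set" where
  "stays_close m \<epsilon> k = {\<omega> \<in> space M. \<forall>j\<in>{m..k}. \<bar>partial_sum j \<omega> - partial_sum m \<omega>\<bar> < \<epsilon>}"

definition stopped_sum :: "nat \<Rightarrow> real \<Rightarrow> nat \<Rightarrow> 'a \<Rightarrow> real" where
  "stopped_sum m \<epsilon> n \<omega> = (\<Sum>k\<in>{m..<n}. indicator (stays_close m \<epsilon> k) \<omega> * f k \<omega>)"

lemma stays_close_in_F: "stays_close m \<epsilon> k \<in> sets (F k)"
proof -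
  have "{\<omega> \<in> space (F k). \<forall>j\<in>{m..k}. \<bar>partial_sum j \<omega> - partial_sum m \<omega>\<bar> < \<epsilon>} \<in> sets (F k)"
  proof (rule sets.sets_Collect_finite_All)
    fix j assume "j \<in> {m..k}"
    then have [measurable]: "partial_sum j \<in> borel_measurable (F k)" "partial_sum m \<in> borel_measurable (F k)"
      by (auto intro: partial_sum_measurable_F)
    show "{\<omega> \<in> space (F k). \<bar>partial_sum j \<omega> - partial_sum m \<omega>\<bar> < \<epsilon>} \<in> sets (F k)"
      by measurable
  qed simp
  then show ?thesis
    using subalgebra[of k] by (simp add: stays_close_def subalgebra_def)
qed

lemma stays_close_in_M [measurable]: "stays_close m \<epsilon> k \<in> sets M"
  using stays_close_in_F[of m \<epsilon> k] subalgebra[of k] by (auto simp: subalgebra_def)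

lemma borel_measurable_stopped_sum [measurable]: "stopped_sum m \<epsilon> n \<in> borel_measurable M"
  unfolding stopped_sum_def by measurable

lemma stopped_sum_Suc:
  "m \<le> n \<Longrightarrow> stopped_sum m \<epsilon> (Suc n) \<omega> = stopped_sum m \<epsilon> n \<omega> + indicator (stays_close m \<epsilon> n) \<omega> * f n \<omega>"
  by (simp add: stopped_sum_def)

lemma stopped_sum_cases:
  assumes "0 < \<epsilon>" and "m \<le> n" and "\<omega> \<in> space M"
  shows "\<omega> \<in> stays_close m \<epsilon> n \<Longrightarrow> stopped_sum m \<epsilon> n \<omega> = partial_sum n \<omega> - partial_sum m \<omega>"
    and "\<omega> \<notin> stays_close m \<epsilon> n \<Longrightarrow> \<epsilon> \<le> \<bar>stopped_sum m \<epsilon> n \<omega>\<bar>"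
proof -
  have "(\<omega> \<in> stays_close m \<epsilon> n \<longrightarrow> stopped_sum m \<epsilon> n \<omega> = partial_sum n \<omega> - partial_sum m \<omega>)
      \<and> (\<omega> \<notin> stays_close m \<epsilon> n \<longrightarrow> \<epsilon> \<le> \<bar>stopped_sum m \<epsilon> n \<omega>\<bar>)"
    using assms(2)
  proof (induction n rule: dec_induct)
    case base
    then show ?case using assms by (simp add: stays_close_def stopped_sum_def)
  next
    case (step n)
    have "\<omega> \<in> stays_close m \<epsilon> (Suc n) \<longleftrightarrow>
        \<omega> \<in> stays_close m \<epsilon> n \<and> \<bar>partial_sum (Suc n) \<omega> - partial_sum m \<omega>\<bar> < \<epsilon>"
      using step.hyps assms(3) by (auto simp: stays_close_def atLeastAtMostSuc_conv)
    then show ?case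
      using step.IH stopped_sum_Suc[OF step.hyps(1)] by (cases "\<omega> \<in> stays_close m \<epsilon> n") auto
  qed
  then show "\<omega> \<in> stays_close m \<epsilon> n \<Longrightarrow> stopped_sum m \<epsilon> n \<omega> = partial_sum n \<omega> - partial_sum m \<omega>"
    and "\<omega> \<notin> stays_close m \<epsilon> n \<Longrightarrow> \<epsilon> \<le> \<bar>stopped_sum m \<epsilon> n \<omega>\<bar>"
    by blast+
qed

lemma stopped_sum_Suc_power2:
  assumes "0 < \<epsilon>" and "m \<le> n" and "\<omega> \<in> space M"
  shows "(stopped_sum m \<epsilon> (Suc n) \<omega>)\<^sup>2 = (stopped_sum m \<epsilon> n \<omega>)\<^sup>2
           + 2 * (indicator (stays_close m \<epsilon> n) \<omega> * (partial_sum n \<omega> - partial_sum m \<omega>) * f n \<omega>)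
           + indicator (stays_close m \<epsilon> n) \<omega> * (f n \<omega>)\<^sup>2"
proof (cases "\<omega> \<in> stays_close m \<epsilon> n")
  case True
  have T: "stopped_sum m \<epsilon> n \<omega> = partial_sum n \<omega> - partial_sum m \<omega>"
    using True by (rule stopped_sum_cases(1)[OF assms])
  show ?thesis
    unfolding stopped_sum_Suc[OF assms(2)] T using True by (simp add: power2_eq_square algebra_simps)
qed (simp add: stopped_sum_Suc[OF assms(2)])

lemma stopped_weight_measurable_F:
  assumes "m \<le> n"
  shows "(\<lambda>\<omega>. indicator (stays_close m \<epsilon> n) \<omega> * (partial_sum n \<omega> - partial_sum m \<omega>))
           \<in> borel_measurable (F n)"
proof -
  have [measurable]: "partial_sum n \<in> borel_measurable (F n)" "partial_sum m \<in> borel_measurable (F n)"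
    "stays_close m \<epsilon> n \<in> sets (F n)"
    using assms by (auto intro: partial_sum_measurable_F simp: stays_close_in_F)
  show ?thesis by measurable
qed

lemma abs_stopped_weight_le:
  assumes "m \<le> n" and "0 < \<epsilon>"
  shows "\<bar>indicator (stays_close m \<epsilon> n) \<omega> * (partial_sum n \<omega> - partial_sum m \<omega>)\<bar> \<le> \<epsilon>"
  using assms by (auto simp: stays_close_def indicator_def less_imp_le)

lemma integral_stopped_sum_power2_le:
  assumes "0 < \<epsilon>" and "m \<le> n"
  shows "integrable M (\<lambda>\<omega>. (stopped_sum m \<epsilon> n \<omega>)\<^sup>2)
    \<and> (\<integral>\<omega>. (stopped_sum m \<epsilon> n \<omega>)\<^sup>2 \<partial>M) \<le> (\<Sum>k\<in>{m..<n}. \<integral>\<omega>. (f k \<omega>)\<^sup>2 \<partial>M)"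
  using assms(2)
proof (induction n rule: dec_induct)
  case base
  then show ?case by (simp add: stopped_sum_def)
next
  case (step n)
  define G where "G = stays_close m \<epsilon> n"
  define g where "g \<omega> = indicator G \<omega> * (partial_sum n \<omega> - partial_sum m \<omega>)" for \<omega>
  have g_F: "g \<in> borel_measurable (F n)"
    unfolding g_def G_def using step.hyps(1) by (rule stopped_weight_measurable_F)
  have g_bound: "\<bar>g \<omega>\<bar> \<le> \<epsilon>" for \<omega>
    unfolding g_def G_def using step.hyps(1) assms(1) by (rule abs_stopped_weight_le)
  have [measurable]: "g \<in> borel_measurable M" "G \<in> sets M"
    using g_F by (auto intro: measurable_from_F simp: G_def)
  have gf_int: "integrable M (\<lambda>\<omega>. g \<omega> * f n \<omega>)"
    by (rule Bochner_Integration.integrable_bound[of _ "\<lambda>\<omega>. \<epsilon> * f n \<omega>"])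
      (use integrable_f g_bound assms(1) in \<open>auto intro!: AE_I2 mult_right_mono simp: abs_mult\<close>)
  have Gf_int: "integrable M (\<lambda>\<omega>. indicator G \<omega> * (f n \<omega>)\<^sup>2)"
    using integrable_real_mult_indicator[OF _ integrable_square, of G n]
    by (simp add: G_def mult.commute)
  have square_Suc: "AE \<omega> in M. (stopped_sum m \<epsilon> (Suc n) \<omega>)\<^sup>2
      = (stopped_sum m \<epsilon> n \<omega>)\<^sup>2 + 2 * (g \<omega> * f n \<omega>) + indicator G \<omega> * (f n \<omega>)\<^sup>2"
    using stopped_sum_Suc_power2[OF assms(1) step.hyps(1)] by (auto simp: g_def G_def mult.assoc)
  have "integrable M (\<lambda>\<omega>. (stopped_sum m \<epsilon> n \<omega>)\<^sup>2 + 2 * (g \<omega> * f n \<omega>) + indicator G \<omega> * (f n \<omega>)\<^sup>2)"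
    using step.IH gf_int Gf_int by auto
  then have "integrable M (\<lambda>\<omega>. (stopped_sum m \<epsilon> (Suc n) \<omega>)\<^sup>2)"
    by (rule integrable_cong_AE_imp) (use square_Suc in \<open>auto elim: eventually_mono\<close>)
  moreover have "(\<integral>\<omega>. (stopped_sum m \<epsilon> (Suc n) \<omega>)\<^sup>2 \<partial>M)
      = (\<integral>\<omega>. (stopped_sum m \<epsilon> n \<omega>)\<^sup>2 + 2 * (g \<omega> * f n \<omega>) + indicator G \<omega> * (f n \<omega>)\<^sup>2 \<partial>M)"
    by (rule integral_cong_AE) (use square_Suc in auto)
  moreover have "(\<integral>\<omega>. g \<omega> * f n \<omega> \<partial>M) = 0"
    using orthogonal[OF g_F] g_bound by blast
  moreover have "(\<integral>\<omega>. indicator G \<omega> * (f n \<omega>)\<^sup>2 \<partial>M) \<le> (\<integral>\<omega>. (f n \<omega>)\<^sup>2 \<partial>M)"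
    by (rule integral_mono[OF Gf_int integrable_square]) (auto simp: indicator_def)
  ultimately show ?case
    using step.IH step.hyps gf_int Gf_int by simp
qed


theorem kolmogorov_maximal_inequality:
  assumes "0 < \<epsilon>" and "m \<le> n"
  shows "measure M {\<omega> \<in> space M. \<exists>j\<in>{m..n}. \<epsilon> \<le> \<bar>partial_sum j \<omega> - partial_sum m \<omega>\<bar>}
           \<le> (\<Sum>k\<in>{m..<n}. \<integral>\<omega>. (f k \<omega>)\<^sup>2 \<partial>M) / \<epsilon>\<^sup>2"
proof -
  note T = integral_stopped_sum_power2_le[OF assms]
  have "{\<omega> \<in> space M. \<exists>j\<in>{m..n}. \<epsilon> \<le> \<bar>partial_sum j \<omega> - partial_sum m \<omega>\<bar>}
      \<subseteq> {\<omega> \<in> space M. \<epsilon>\<^sup>2 \<le> (stopped_sum m \<epsilon> n \<omega>)\<^sup>2}"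
  proof safe
    fix \<omega> j assume "\<omega> \<in> space M" "j \<in> {m..n}" "\<epsilon> \<le> \<bar>partial_sum j \<omega> - partial_sum m \<omega>\<bar>"
    then have "\<omega> \<notin> stays_close m \<epsilon> n" by (auto simp: stays_close_def not_less)
    then have "\<epsilon> \<le> \<bar>stopped_sum m \<epsilon> n \<omega>\<bar>" by (rule stopped_sum_cases(2)[OF assms \<open>\<omega> \<in> space M\<close>])
    then show "\<epsilon>\<^sup>2 \<le> (stopped_sum m \<epsilon> n \<omega>)\<^sup>2"
      using assms(1) power_mono[of \<epsilon> "\<bar>stopped_sum m \<epsilon> n \<omega>\<bar>" 2] by simp
  qed
  then have "measure M {\<omega> \<in> space M. \<exists>j\<in>{m..n}. \<epsilon> \<le> \<bar>partial_sum j \<omega> - partial_sum m \<omega>\<bar>}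
      \<le> measure M {\<omega> \<in> space M. \<epsilon>\<^sup>2 \<le> (stopped_sum m \<epsilon> n \<omega>)\<^sup>2}"
    by (rule finite_measure_mono) measurable
  also have "\<dots> \<le> (\<integral>\<omega>. (stopped_sum m \<epsilon> n \<omega>)\<^sup>2 \<partial>M) / \<epsilon>\<^sup>2"
    using T assms(1) by (intro integral_Markov_inequality_measure[where A = "space M"]) auto
  also have "\<dots> \<le> (\<Sum>k\<in>{m..<n}. \<integral>\<omega>. (f k \<omega>)\<^sup>2 \<partial>M) / \<epsilon>\<^sup>2"
    using T by (simp add: divide_right_mono)
  finally show ?thesis .
qed

lemma tail_oscillation_measure_le:
  assumes "0 < \<epsilon>" and summable: "summable (\<lambda>k. \<integral>\<omega>. (f k \<omega>)\<^sup>2 \<partial>M)"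
  shows "measure M {\<omega> \<in> space M. \<exists>j\<ge>m. \<epsilon> \<le> \<bar>partial_sum j \<omega> - partial_sum m \<omega>\<bar>}
           \<le> (\<Sum>k. \<integral>\<omega>. (f (k + m) \<omega>)\<^sup>2 \<partial>M) / \<epsilon>\<^sup>2"
proof -
  define A where "A n = {\<omega> \<in> space M. \<exists>j\<in>{m..m + n}. \<epsilon> \<le> \<bar>partial_sum j \<omega> - partial_sum m \<omega>\<bar>}"
    for n
  have "A n \<in> sets M" for n unfolding A_def by measurable
  moreover have "incseq A"
  proof (rule incseq_SucI, rule subsetI)
    fix n \<omega> assume "\<omega> \<in> A n"
    then obtain j where "\<omega> \<in> space M" "j \<in> {m..m + n}" "\<epsilon> \<le> \<bar>partial_sum j \<omega> - partial_sum m \<omega>\<bar>"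
      by (auto simp: A_def)
    then show "\<omega> \<in> A (Suc n)" unfolding A_def by (intro CollectI conjI bexI[of _ j]) auto
  qed
  ultimately have lim: "(\<lambda>n. measure M (A n)) \<longlonglongrightarrow> measure M (\<Union>n. A n)"
    by (intro finite_Lim_measure_incseq) auto
  have bound: "measure M (A n) \<le> (\<Sum>k. \<integral>\<omega>. (f (k + m) \<omega>)\<^sup>2 \<partial>M) / \<epsilon>\<^sup>2" for n
  proof -
    have "(\<Sum>k\<in>{m..<m + n}. \<integral>\<omega>. (f k \<omega>)\<^sup>2 \<partial>M) = (\<Sum>k<n. \<integral>\<omega>. (f (k + m) \<omega>)\<^sup>2 \<partial>M)"
      using sum.shift_bounds_nat_ivl[of _ 0 m n] by (simp add: add.commute lessThan_atLeast0)
    also have "\<dots> \<le> (\<Sum>k. \<integral>\<omega>. (f (k + m) \<omega>)\<^sup>2 \<partial>M)"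
      using summable summable_iff_shift[where f = "\<lambda>k. \<integral>\<omega>. (f k \<omega>)\<^sup>2 \<partial>M" and k = m]
      by (intro sum_le_suminf) auto
    finally have "(\<Sum>k\<in>{m..<m + n}. \<integral>\<omega>. (f k \<omega>)\<^sup>2 \<partial>M) / \<epsilon>\<^sup>2
        \<le> (\<Sum>k. \<integral>\<omega>. (f (k + m) \<omega>)\<^sup>2 \<partial>M) / \<epsilon>\<^sup>2"
      by (rule divide_right_mono) simp
    moreover have "measure M (A n) \<le> (\<Sum>k\<in>{m..<m + n}. \<integral>\<omega>. (f k \<omega>)\<^sup>2 \<partial>M) / \<epsilon>\<^sup>2"
      unfolding A_def by (rule kolmogorov_maximal_inequality[OF assms(1)]) simp
    ultimately show ?thesis by linarith
  qed
  have "(\<Union>n. A n) = {\<omega> \<in> space M. \<exists>j\<ge>m. \<epsilon> \<le> \<bar>partial_sum j \<omega> - partial_sum m \<omega>\<bar>}"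
  proof (intro equalityI subsetI)
    fix \<omega> assume "\<omega> \<in> {\<omega> \<in> space M. \<exists>j\<ge>m. \<epsilon> \<le> \<bar>partial_sum j \<omega> - partial_sum m \<omega>\<bar>}"
    then obtain j where "\<omega> \<in> space M" "m \<le> j" "\<epsilon> \<le> \<bar>partial_sum j \<omega> - partial_sum m \<omega>\<bar>" by blast
    then have "\<omega> \<in> A (j - m)" unfolding A_def by (intro CollectI conjI bexI[of _ j]) auto
    then show "\<omega> \<in> (\<Union>n. A n)" by blast
  qed (auto simp: A_def)
  with LIMSEQ_le_const2[OF lim] bound show ?thesis by auto
qed

lemma AE_partial_sum_settles:
  assumes summable: "summable (\<lambda>k. \<integral>\<omega>. (f k \<omega>)\<^sup>2 \<partial>M)" and "0 < \<delta>"
  shows "AE \<omega> in M. \<exists>m. \<forall>j\<ge>m. \<bar>partial_sum j \<omega> - partial_sum m \<omega>\<bar> < \<delta>"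
proof (rule AE_I)
  define R where "R m = (\<Sum>k. \<integral>\<omega>. (f (k + m) \<omega>)\<^sup>2 \<partial>M)" for m
  define N where "N = {\<omega> \<in> space M. \<forall>m. \<exists>j\<ge>m. \<delta> \<le> \<bar>partial_sum j \<omega> - partial_sum m \<omega>\<bar>}"
  show "N \<in> sets M" unfolding N_def by measurable
  show "{\<omega> \<in> space M. \<not> (\<exists>m. \<forall>j\<ge>m. \<bar>partial_sum j \<omega> - partial_sum m \<omega>\<bar> < \<delta>)} \<subseteq> N"
    by (auto simp: N_def not_less)
  have "measure M N \<le> R m / \<delta>\<^sup>2" for m
  proof -
    have "measure M N \<le> measure M {\<omega> \<in> space M. \<exists>j\<ge>m. \<delta> \<le> \<bar>partial_sum j \<omega> - partial_sum m \<omega>\<bar>}"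
      by (rule finite_measure_mono) (auto simp: N_def)
    then show ?thesis
      using tail_oscillation_measure_le[OF assms(2) summable, of m] by (simp add: R_def)
  qed
  moreover have "(\<lambda>m. R m / \<delta>\<^sup>2) \<longlonglongrightarrow> 0"
    unfolding R_def using tendsto_divide_zero[OF suminf_exist_split2[OF summable]] by simp
  ultimately have "measure M N \<le> 0"
    by (intro LIMSEQ_le_const[where X = "\<lambda>m. R m / \<delta>\<^sup>2"]) auto
  then show "emeasure M N = 0"
    by (simp add: emeasure_eq_measure measure_le_0_iff)
qed

theorem AE_convergent_partial_sum:
  assumes "summable (\<lambda>k. \<integral>\<omega>. (f k \<omega>)\<^sup>2 \<partial>M)"
  shows "AE \<omega> in M. convergent (\<lambda>n. partial_sum n \<omega>)"
proof -
  have "AE \<omega> in M. \<forall>i. \<exists>m. \<forall>j\<ge>m. \<bar>partial_sum j \<omega> - partial_sum m \<omega>\<bar> < inverse (Suc i)"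
    unfolding AE_all_countable by (intro allI AE_partial_sum_settles[OF assms]) simp
  then show ?thesis
  proof eventually_elim
    case (elim \<omega>)
    have "Cauchy (\<lambda>n. partial_sum n \<omega>)"
      unfolding Cauchy_altdef2 dist_real_def
    proof (intro allI impI)
      fix e :: real assume "0 < e"
      then obtain i where i: "inverse (Suc i) < e" using reals_Archimedean by blast
      obtain m where "\<forall>j\<ge>m. \<bar>partial_sum j \<omega> - partial_sum m \<omega>\<bar> < inverse (Suc i)"
        using elim by blast
      with i show "\<exists>N. \<forall>n\<ge>N. \<bar>partial_sum n \<omega> - partial_sum N \<omega>\<bar> < e"
        by (auto intro: less_trans)
    qed
    then show ?case by (simp add: Cauchy_convergent_iff)
  qed
qed

end

section \<open>The stochastic Krasnoselskii-Mann iteration\<close>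

lemma borel_measurable_vec_nth [measurable]: "(\<lambda>v::'a::topological_space^'n. v $ i) \<in> borel_measurable borel"
  by (intro borel_measurable_continuous_onI continuous_on_component continuous_on_id)

lemma powr_rescaled_moment_le:
  fixes r t c A B p :: real
  assumes "1 \<le> r" and "0 \<le> t" and "t \<le> r + c" and "0 \<le> c" and "0 \<le> A" and "0 \<le> B" and "0 \<le> p"
  shows "r powr (-p) * (A + B * t powr p) \<le> A + B * (1 + c) powr p"
proof -
  have "t \<le> r * (1 + c)"
    using assms(1,3,4) mult_left_mono[of 1 r c] by (simp add: algebra_simps)
  then have "(t / r) powr p \<le> (1 + c) powr p"
    using assms by (intro powr_mono2) (auto simp: divide_le_eq mult.commute)
  moreover have "r powr (-p) \<le> 1"
    using assms(1,7) ge_one_powr_ge_zero[of r p] by (simp add: powr_minus inverse_le_1_iff)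
  moreover have "r powr (-p) * (A + B * t powr p) = A * r powr (-p) + B * (t / r) powr p"
    using assms(1,2) by (simp add: powr_divide powr_minus divide_inverse algebra_simps powr_mult inverse_powr)
  moreover have "A * r powr (-p) \<le> A"
    using \<open>r powr (-p) \<le> 1\<close> assms(5) by (intro mult_right_le_one_le) auto
  ultimately show ?thesis
    using mult_left_mono[OF \<open>(t / r) powr p \<le> (1 + c) powr p\<close> assms(6)] by linarith
qed

locale stochastic_km = prob_space M for M :: "'a measure" +
  fixes H :: "real^'d \<Rightarrow> real^'d" and x w :: "nat \<Rightarrow> 'a \<Rightarrow> real^'d"
    and \<alpha> :: "nat \<Rightarrow> real" and p A B :: real and xbar :: "real^'d"
  assumes p_gt_1: "1 < p" and p_le_2: "p \<le> 2"
    and nonexpansive: "\<And>u v. norm (H u - H v) \<le> norm (u - v)"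
    and x0_measurable: "x 0 \<in> borel_measurable M"
    and w_integrable: "\<And>k. integrable M (w k)"
    and iteration: "\<And>k \<omega>. \<omega> \<in> space M \<Longrightarrow>
                 x (Suc k) \<omega> = x k \<omega> + \<alpha> k *\<^sub>R (H (x k \<omega>) - x k \<omega> + w k \<omega>)"
    and noise_centered: "\<And>k i. AE \<omega> in M.
                 real_cond_exp M (nat_filtration M x k) (\<lambda>\<eta>. w k \<eta> $ i) \<omega> = 0"
    and xbar_fixed: "H xbar = xbar" and A_pos: "A > 0" and B_nonneg: "B \<ge> 0"
    and noise_moment: "\<And>k. AE \<omega> in M.
                 nn_cond_exp M (nat_filtration M x k) (\<lambda>\<eta>. ennreal (norm (w k \<eta>) powr p)) \<omega>
                   \<le> ennreal (A + B * norm (x k \<omega> - xbar) powr p)"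
    and step_pos: "\<And>k. \<alpha> k > 0" and step_decseq: "decseq \<alpha>"
    and step_not_summable: "\<not> summable \<alpha>"
    and step_powr_summable: "summable (\<lambda>k. \<alpha> k powr p)"
begin

abbreviation F :: "nat \<Rightarrow> 'a measure" where
  "F \<equiv> nat_filtration M x"

lemma continuous_on_H: "continuous_on UNIV H"
  by (rule lipschitz_on_continuous_on[of 1]) (simp add: lipschitz_onI dist_norm nonexpansive)

lemma borel_measurable_H [measurable]: "H \<in> borel_measurable borel"
  by (rule borel_measurable_continuous_onI[OF continuous_on_H])

lemma borel_measurable_w [measurable]: "w k \<in> borel_measurable M"
  using w_integrable by (rule borel_measurable_integrable)

lemma borel_measurable_x [measurable]: "x k \<in> borel_measurable M"
proof (induction k)
  case 0 then show ?case by (rule x0_measurable)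
next
  case (Suc k)
  note [measurable] = Suc
  have "(\<lambda>\<omega>. x k \<omega> + \<alpha> k *\<^sub>R (H (x k \<omega>) - x k \<omega> + w k \<omega>)) \<in> borel_measurable M" by measurable
  then show ?case using measurable_cong[of M "x (Suc k)", OF iteration] by simp
qed

lemma subalgebra_F: "subalgebra M (F k)"
  by (rule subalgebra_nat_filtration) simp

lemma sigma_finite_subalgebra_F: "sigma_finite_subalgebra M (F k)"
  by (rule sigma_finite_subalgebra_of_subalgebra[OF subalgebra_F])

lemma measurable_from_F: "f \<in> borel_measurable (F k) \<Longrightarrow> f \<in> borel_measurable M"
  by (rule measurable_from_subalg[OF subalgebra_F])

lemma measurable_F_mono: "f \<in> borel_measurable (F j) \<Longrightarrow> j \<le> k \<Longrightarrow> f \<in> borel_measurable (F k)"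
  by (rule measurable_from_subalg[OF subalgebra_nat_filtration_mono])

lemma x_measurable_F: "x k \<in> borel_measurable (F k)"
  by (rule measurable_nat_filtration) simp

lemma x_Suc_measurable_F: "x k \<in> borel_measurable (F (Suc k))"
  by (rule measurable_nat_filtration) simp

lemma w_measurable_F: "w k \<in> borel_measurable (F (Suc k))"
proof -
  note [measurable] = x_Suc_measurable_F x_measurable_F[of "Suc k"]
  have "(\<lambda>\<omega>. (1 / \<alpha> k) *\<^sub>R (x (Suc k) \<omega> - x k \<omega>) - (H (x k \<omega>) - x k \<omega>)) \<in> borel_measurable (F (Suc k))"
    by measurable
  moreover have "(1 / \<alpha> k) *\<^sub>R (x (Suc k) \<omega> - x k \<omega>) - (H (x k \<omega>) - x k \<omega>) = w k \<omega>"
    if "\<omega> \<in> space (F (Suc k))" for \<omega>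
    using iteration[of \<omega> k] step_pos[of k] that by (simp add: scaleR_add_right)
  ultimately show ?thesis by (rule measurable_cong[THEN iffD1, rotated])
qed

(* In the notation of the header: bracket z k = sqrt V_k, rel_noise z k = theta_k and
   cross_cut z k = d_k. *)
definition bracket :: "real^'d \<Rightarrow> nat \<Rightarrow> 'a \<Rightarrow> real" where
  "bracket z k \<omega> = japanese_bracket (x k \<omega> - z)"

definition noise :: "nat \<Rightarrow> 'a \<Rightarrow> real^'d" where
  "noise k \<omega> = \<alpha> k *\<^sub>R w k \<omega>"

definition averaged :: "nat \<Rightarrow> 'a \<Rightarrow> real^'d" where
  "averaged k \<omega> = x k \<omega> + \<alpha> k *\<^sub>R (H (x k \<omega>) - x k \<omega>)"

definition rel_noise :: "real^'d \<Rightarrow> nat \<Rightarrow> 'a \<Rightarrow> real" where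
  "rel_noise z k \<omega> = (norm (noise k \<omega>) / bracket z k \<omega>) powr p"

definition cross :: "real^'d \<Rightarrow> nat \<Rightarrow> 'a \<Rightarrow> real^'d \<Rightarrow> real" where
  "cross z k \<omega> V = inner (averaged k \<omega> - z) V / (bracket z k \<omega>)\<^sup>2"

definition cross_cut :: "real^'d \<Rightarrow> nat \<Rightarrow> 'a \<Rightarrow> real" where
  "cross_cut z k \<omega> = cross z k \<omega> (cutoff (bracket z k \<omega>) (noise k \<omega>))"

definition growth_bound :: real where
  "growth_bound = 1 + 2 * \<alpha> 0"

lemma growth_bound_ge_1: "1 \<le> growth_bound"
  using step_pos[of 0] by (simp add: growth_bound_def)

lemma one_plus_step_le_growth_bound: "1 + 2 * \<alpha> k \<le> growth_bound"
  using step_decseq by (simp add: growth_bound_def decseq_def)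

lemma bracket_ge_1: "1 \<le> bracket z k \<omega>"
  by (simp add: bracket_def japanese_bracket_ge_one)

lemma rel_noise_nonneg: "0 \<le> rel_noise z k \<omega>"
  by (simp add: rel_noise_def)

lemma norm_averaged_le:
  assumes "H z = z"
  shows "norm (averaged k \<omega> - z) \<le> growth_bound * bracket z k \<omega>"
proof -
  have "norm (averaged k \<omega> - z) \<le> (1 + 2 * \<alpha> k) * norm (x k \<omega> - z)"
    unfolding averaged_def using nonexpansive[of "x k \<omega>" z] assms step_pos[of k]
    by (intro averaged_step_dist_le) auto
  also have "\<dots> \<le> growth_bound * bracket z k \<omega>"
    using one_plus_step_le_growth_bound growth_bound_ge_1 norm_le_japanese_bracket[of "x k \<omega> - z"]
    by (intro mult_mono) (auto simp: bracket_def)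
  finally show ?thesis .
qed

lemma abs_cross_le:
  assumes "H z = z"
  shows "\<bar>cross z k \<omega> V\<bar> \<le> growth_bound * (norm V / bracket z k \<omega>)"
proof -
  have s: "1 \<le> bracket z k \<omega>" by (rule bracket_ge_1)
  have "\<bar>inner (averaged k \<omega> - z) V\<bar> \<le> norm (averaged k \<omega> - z) * norm V"
    by (rule Cauchy_Schwarz_ineq2)
  also have "\<dots> \<le> growth_bound * bracket z k \<omega> * norm V"
    using norm_averaged_le[OF assms] by (rule mult_right_mono) simp
  finally have "\<bar>inner (averaged k \<omega> - z) V\<bar> / (bracket z k \<omega>)\<^sup>2
      \<le> growth_bound * bracket z k \<omega> * norm V / (bracket z k \<omega>)\<^sup>2"
    by (rule divide_right_mono) simp
  also have "\<dots> = growth_bound * (norm V / bracket z k \<omega>)"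
    using s by (simp add: power2_eq_square)
  finally show ?thesis by (simp add: cross_def abs_div)
qed

lemma abs_cross_cut_le:
  assumes "H z = z"
  shows "\<bar>cross_cut z k \<omega>\<bar> \<le> growth_bound"
proof -
  have "norm (cutoff (bracket z k \<omega>) (noise k \<omega>)) / bracket z k \<omega> \<le> 1"
    using bracket_ge_1[of z k \<omega>] by (simp add: cutoff_def)
  then have "growth_bound * (norm (cutoff (bracket z k \<omega>) (noise k \<omega>)) / bracket z k \<omega>) \<le> growth_bound"
    using growth_bound_ge_1 by (intro mult_left_le) auto
  then show ?thesis
    using abs_cross_le[OF assms, of k \<omega> "cutoff (bracket z k \<omega>) (noise k \<omega>)"]
    unfolding cross_cut_def by linarith
qed

lemma cross_cut_power2_le:
  assumes "H z = z"
  shows "(cross_cut z k \<omega>)\<^sup>2 \<le> growth_bound\<^sup>2 * rel_noise z k \<omega>"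
proof -
  define r where "r = norm (cutoff (bracket z k \<omega>) (noise k \<omega>)) / bracket z k \<omega>"
  have "(cross_cut z k \<omega>)\<^sup>2 \<le> (growth_bound * r)\<^sup>2"
    using abs_cross_le[OF assms] growth_bound_ge_1 bracket_ge_1[of z k \<omega>]
    unfolding cross_cut_def r_def by (intro power2_le_iff_abs_le[THEN iffD2]) auto
  also have "\<dots> = growth_bound\<^sup>2 * r\<^sup>2" by (simp add: power_mult_distrib)
  also have "\<dots> \<le> growth_bound\<^sup>2 * rel_noise z k \<omega>"
    using cutoff_ratio_power2_le[of "bracket z k \<omega>" p] bracket_ge_1[of z k \<omega>] p_le_2
    by (intro mult_left_mono) (auto simp: r_def rel_noise_def)
  finally show ?thesis .
qed

lemma cross_cut_eq:
  "cross_cut z k \<omega> = cross z k \<omega> (noise k \<omega>)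
     - cross z k \<omega> (noise k \<omega> - cutoff (bracket z k \<omega>) (noise k \<omega>))"
  by (simp add: cross_cut_def cross_def inner_diff_right diff_divide_distrib)

lemma abs_cross_remainder_le:
  assumes "H z = z"
  shows "\<bar>cross z k \<omega> (noise k \<omega> - cutoff (bracket z k \<omega>) (noise k \<omega>))\<bar> \<le> growth_bound * rel_noise z k \<omega>"
proof -
  have "norm (noise k \<omega> - cutoff (bracket z k \<omega>) (noise k \<omega>)) / bracket z k \<omega> \<le> rel_noise z k \<omega>"
    unfolding rel_noise_def using bracket_ge_1[of z k \<omega>] p_gt_1 by (intro cutoff_remainder_ratio_le) auto
  then have "growth_bound * (norm (noise k \<omega> - cutoff (bracket z k \<omega>) (noise k \<omega>)) / bracket z k \<omega>)
      \<le> growth_bound * rel_noise z k \<omega>"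
    using growth_bound_ge_1 by (intro mult_left_mono) auto
  then show ?thesis by (rule order_trans[OF abs_cross_le[OF assms]])
qed

lemma measurable_bracket:
  assumes [measurable]: "x k \<in> borel_measurable N"
  shows "bracket z k \<in> borel_measurable N"
  unfolding bracket_def[abs_def] japanese_bracket_def by measurable

lemma measurable_averaged:
  assumes [measurable]: "x k \<in> borel_measurable N"
  shows "averaged k \<in> borel_measurable N"
  unfolding averaged_def[abs_def] by measurable

lemma measurable_noise:
  assumes [measurable]: "w k \<in> borel_measurable N"
  shows "noise k \<in> borel_measurable N"
  unfolding noise_def[abs_def] by measurable

lemma measurable_rel_noise:
  assumes "x k \<in> borel_measurable N" and "w k \<in> borel_measurable N"
  shows "rel_noise z k \<in> borel_measurable N"
  using measurable_bracket[OF assms(1)] measurable_noise[OF assms(2)]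
  unfolding rel_noise_def[abs_def] by measurable

lemma measurable_cross:
  assumes "x k \<in> borel_measurable N" and [measurable]: "V \<in> borel_measurable N"
  shows "(\<lambda>\<omega>. cross z k \<omega> (V \<omega>)) \<in> borel_measurable N"
  using measurable_bracket[OF assms(1)] measurable_averaged[OF assms(1)]
  unfolding cross_def by measurable

lemma measurable_cross_cut:
  assumes "x k \<in> borel_measurable N" and "w k \<in> borel_measurable N"
  shows "cross_cut z k \<in> borel_measurable N"
  using measurable_bracket[OF assms(1)] measurable_noise[OF assms(2)]
  unfolding cross_cut_def[abs_def] by (intro measurable_cross[OF assms(1)]) measurable

lemmas borel_measurable_quantities [measurable] =
  measurable_bracket[OF borel_measurable_x] measurable_averaged[OF borel_measurable_x]
  measurable_noise[OF borel_measurable_w] measurable_rel_noise[OF borel_measurable_x borel_measurable_w]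
  measurable_cross[OF borel_measurable_x measurable_noise[OF borel_measurable_w]]
  measurable_cross_cut[OF borel_measurable_x borel_measurable_w]

definition moment_const :: "real^'d \<Rightarrow> real" where
  "moment_const z = A + B * (1 + norm (z - xbar)) powr p"

lemma moment_const_nonneg: "0 \<le> moment_const z"
  using A_pos B_nonneg by (simp add: moment_const_def)

lemma rel_noise_eq:
  "rel_noise z k \<omega> = \<alpha> k powr p * bracket z k \<omega> powr (-p) * norm (w k \<omega>) powr p"
  using step_pos[of k] bracket_ge_1[of z k \<omega>]
  by (simp add: rel_noise_def noise_def powr_divide powr_mult powr_minus divide_inverse inverse_powr)

lemma bracket_powr_moment_le:
  "bracket z k \<omega> powr (-p) * (A + B * norm (x k \<omega> - xbar) powr p) \<le> moment_const z"
proof -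
  have "norm (x k \<omega> - xbar) \<le> bracket z k \<omega> + norm (z - xbar)"
    using norm_triangle_ineq[of "x k \<omega> - z" "z - xbar"] norm_le_japanese_bracket[of "x k \<omega> - z"]
    by (simp add: bracket_def)
  then show ?thesis
    unfolding moment_const_def using bracket_ge_1 A_pos B_nonneg p_gt_1
    by (intro powr_rescaled_moment_le) auto
qed

lemma nn_integral_rel_noise_le:
  "(\<integral>\<^sup>+\<omega>. rel_noise z k \<omega> \<partial>M) \<le> ennreal (\<alpha> k powr p * moment_const z)"
proof -
  interpret sigma_finite_subalgebra M "F k" by (rule sigma_finite_subalgebra_F)
  define g where "g \<omega> = \<alpha> k powr p * bracket z k \<omega> powr (-p)" for \<omega>
  have [measurable]: "bracket z k \<in> borel_measurable (F k)"
    by (rule measurable_bracket[OF x_measurable_F])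
  have [measurable]: "(\<lambda>\<omega>. ennreal (g \<omega>)) \<in> borel_measurable (F k)"
    unfolding g_def by measurable
  have "(\<integral>\<^sup>+\<omega>. rel_noise z k \<omega> \<partial>M) = (\<integral>\<^sup>+\<omega>. ennreal (g \<omega>) * ennreal (norm (w k \<omega>) powr p) \<partial>M)"
    by (simp add: rel_noise_eq g_def ennreal_mult)
  also have "\<dots> = (\<integral>\<^sup>+\<omega>. ennreal (g \<omega>) * nn_cond_exp M (F k) (\<lambda>\<eta>. ennreal (norm (w k \<eta>) powr p)) \<omega> \<partial>M)"
    by (rule nn_cond_exp_intg[symmetric]) measurable
  also have "\<dots> \<le> (\<integral>\<^sup>+\<omega>. ennreal (g \<omega>) * ennreal (A + B * norm (x k \<omega> - xbar) powr p) \<partial>M)"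
    using noise_moment[of k] by (intro nn_integral_mono_AE) (auto elim!: eventually_mono intro: mult_left_mono)
  also have "\<dots> \<le> (\<integral>\<^sup>+\<omega>. ennreal (\<alpha> k powr p * moment_const z) \<partial>M)"
  proof (rule nn_integral_mono)
    fix \<omega>
    have "ennreal (g \<omega>) * ennreal (A + B * norm (x k \<omega> - xbar) powr p)
        = ennreal (g \<omega> * (A + B * norm (x k \<omega> - xbar) powr p))"
      using A_pos B_nonneg by (intro ennreal_mult[symmetric]) (auto simp: g_def)
    also have "\<dots> \<le> ennreal (\<alpha> k powr p * moment_const z)"
      using bracket_powr_moment_le[of z k \<omega>]
      by (intro ennreal_leI) (simp add: g_def mult.assoc mult_left_mono)
    finally show "ennreal (g \<omega>) * ennreal (A + B * norm (x k \<omega> - xbar) powr p)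
        \<le> ennreal (\<alpha> k powr p * moment_const z)" .
  qed
  also have "\<dots> = ennreal (\<alpha> k powr p * moment_const z)"
    by (simp add: emeasure_space_1)
  finally show ?thesis .
qed

lemma AE_summable_rel_noise: "AE \<omega> in M. summable (\<lambda>k. rel_noise z k \<omega>)"
  using step_powr_summable moment_const_nonneg
  by (intro AE_summable_if_nn_integral_le[OF _ rel_noise_nonneg nn_integral_rel_noise_le])
    (auto intro: summable_mult2)

lemma integrable_w_component: "integrable M (\<lambda>\<omega>. w k \<omega> $ i)"
proof -
  have "integrable M (\<lambda>\<omega>. w k \<omega> \<bullet> axis i 1)" using w_integrable by auto
  then show ?thesis by (simp add: inner_axis)
qed

lemma integrable_cross_cut: "H z = z \<Longrightarrow> integrable M (cross_cut z k)"
  by (rule integrable_const_bound[where B = growth_bound]) (auto simp: abs_cross_cut_le)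

lemma integrable_cross_noise:
  assumes "H z = z"
  shows "integrable M (\<lambda>\<omega>. cross z k \<omega> (noise k \<omega>))"
proof (rule Bochner_Integration.integrable_bound)
  show "integrable M (\<lambda>\<omega>. growth_bound * \<alpha> k * norm (w k \<omega>))"
    using w_integrable by auto
  show "AE \<omega> in M. norm (cross z k \<omega> (noise k \<omega>)) \<le> norm (growth_bound * \<alpha> k * norm (w k \<omega>))"
  proof (rule AE_I2)
    fix \<omega>
    have "norm (noise k \<omega>) / bracket z k \<omega> \<le> \<alpha> k * norm (w k \<omega>)"
      using bracket_ge_1[of z k \<omega>] step_pos[of k]
      by (simp add: noise_def divide_le_eq mult_le_cancel_left1 mult.commute mult.left_commute)
    then have "growth_bound * (norm (noise k \<omega>) / bracket z k \<omega>) \<le> growth_bound * (\<alpha> k * norm (w k \<omega>))"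
      using growth_bound_ge_1 by (intro mult_left_mono) auto
    then have "\<bar>cross z k \<omega> (noise k \<omega>)\<bar> \<le> growth_bound * (\<alpha> k * norm (w k \<omega>))"
      by (rule order_trans[OF abs_cross_le[OF assms]])
    then show "norm (cross z k \<omega> (noise k \<omega>)) \<le> norm (growth_bound * \<alpha> k * norm (w k \<omega>))"
      using growth_bound_ge_1 step_pos[of k] by (simp add: mult.assoc)
  qed
qed measurable

lemma cond_exp_cross_noise:
  assumes "H z = z"
  shows "AE \<omega> in M. real_cond_exp M (F k) (\<lambda>\<omega>. cross z k \<omega> (noise k \<omega>)) \<omega> = 0"
proof -
  interpret sigma_finite_subalgebra M "F k" by (rule sigma_finite_subalgebra_F)
  define c where "c i \<omega> = \<alpha> k * (averaged k \<omega> - z) $ i / (bracket z k \<omega>)\<^sup>2" for i \<omega>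
  have [measurable]: "averaged k \<in> borel_measurable (F k)" "bracket z k \<in> borel_measurable (F k)"
    by (rule measurable_averaged[OF x_measurable_F] measurable_bracket[OF x_measurable_F])+
  have c_F [measurable]: "c i \<in> borel_measurable (F k)" for i
    unfolding c_def by measurable
  have c_bound: "\<bar>c i \<omega>\<bar> \<le> \<alpha> k * growth_bound" for i \<omega>
  proof -
    have b: "1 \<le> bracket z k \<omega>" by (rule bracket_ge_1)
    have "\<bar>(averaged k \<omega> - z) $ i\<bar> \<le> growth_bound * bracket z k \<omega>"
      using component_le_norm_cart[of "averaged k \<omega> - z" i] norm_averaged_le[OF assms, of k \<omega>]
      by linarith
    also have "\<dots> \<le> growth_bound * (bracket z k \<omega>)\<^sup>2"
      using b growth_bound_ge_1 by (intro mult_left_mono) (auto simp: power2_eq_square)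
    finally show ?thesis
      using b step_pos[of k] by (simp add: c_def abs_mult divide_le_eq mult.assoc mult_left_mono)
  qed
  have c_int: "integrable M (\<lambda>\<omega>. c i \<omega> * w k \<omega> $ i)" for i
  proof (rule Bochner_Integration.integrable_bound)
    show "integrable M (\<lambda>\<omega>. (\<alpha> k * growth_bound) * w k \<omega> $ i)"
      using integrable_w_component by auto
    show "AE \<omega> in M. norm (c i \<omega> * w k \<omega> $ i) \<le> norm ((\<alpha> k * growth_bound) * w k \<omega> $ i)"
      using c_bound step_pos[of k] growth_bound_ge_1
      by (auto intro!: AE_I2 mult_right_mono simp: abs_mult)
  qed (use measurable_from_F[OF c_F] in measurable)
  have cross_eq: "(\<lambda>\<omega>. cross z k \<omega> (noise k \<omega>)) = (\<lambda>\<omega>. \<Sum>i\<in>UNIV. c i \<omega> * w k \<omega> $ i)"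
    by (simp add: cross_def c_def noise_def inner_vec_def sum_divide_distrib sum_distrib_left algebra_simps)
  have "AE \<omega> in M. real_cond_exp M (F k) (\<lambda>\<omega>. \<Sum>i\<in>UNIV. c i \<omega> * w k \<omega> $ i) \<omega>
      = (\<Sum>i\<in>UNIV. real_cond_exp M (F k) (\<lambda>\<omega>. c i \<omega> * w k \<omega> $ i) \<omega>)"
    by (rule real_cond_exp_sum) (rule c_int)
  moreover have "AE \<omega> in M. \<forall>i\<in>UNIV. real_cond_exp M (F k) (\<lambda>\<omega>. c i \<omega> * w k \<omega> $ i) \<omega>
      = c i \<omega> * real_cond_exp M (F k) (\<lambda>\<omega>. w k \<omega> $ i) \<omega>"
    by (intro AE_finite_allI real_cond_exp_mult c_F c_int) (auto simp: measurable_from_F)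
  moreover have "AE \<omega> in M. \<forall>i\<in>UNIV. real_cond_exp M (F k) (\<lambda>\<omega>. w k \<omega> $ i) \<omega> = 0"
    by (intro AE_finite_allI noise_centered) auto
  ultimately show ?thesis unfolding cross_eq by eventually_elim simp
qed

definition compensator :: "real^'d \<Rightarrow> nat \<Rightarrow> 'a \<Rightarrow> real" where
  "compensator z k = real_cond_exp M (F k) (cross_cut z k)"

lemma compensator_measurable_F: "compensator z k \<in> borel_measurable (F k)"
  unfolding compensator_def by (rule borel_measurable_cond_exp)

lemma borel_measurable_compensator [measurable]: "compensator z k \<in> borel_measurable M"
  by (rule measurable_from_F[OF compensator_measurable_F])

lemma abs_compensator_le:
  assumes "H z = z"
  shows "AE \<omega> in M. \<bar>compensator z k \<omega>\<bar> \<le> growth_bound"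
proof -
  interpret sigma_finite_subalgebra M "F k" by (rule sigma_finite_subalgebra_F)
  have "AE \<omega> in M. compensator z k \<omega> \<le> growth_bound"
    unfolding compensator_def using abs_cross_cut_le[OF assms]
    by (intro real_cond_exp_le_c integrable_cross_cut[OF assms] AE_I2) (auto simp: abs_le_iff)
  moreover have "AE \<omega> in M. - growth_bound \<le> compensator z k \<omega>"
    unfolding compensator_def using abs_cross_cut_le[OF assms]
    by (intro real_cond_exp_ge_c integrable_cross_cut[OF assms] AE_I2) (auto simp: abs_le_iff minus_le_iff)
  ultimately show ?thesis by eventually_elim auto
qed

(* The full cross term is centred, so the compensator is minus the conditional mean of the
   large-noise remainder, which is of order rel_noise. *)
lemma nn_integral_abs_compensator_le:
  assumes "H z = z"
  shows "(\<integral>\<^sup>+\<omega>. \<bar>compensator z k \<omega>\<bar> \<partial>M) \<le> ennreal (growth_bound * (\<alpha> k powr p * moment_const z))"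
proof -
  interpret sigma_finite_subalgebra M "F k" by (rule sigma_finite_subalgebra_F)
  define r where "r \<omega> = cross z k \<omega> (noise k \<omega> - cutoff (bracket z k \<omega>) (noise k \<omega>))" for \<omega>
  have [measurable]: "r \<in> borel_measurable M"
    unfolding r_def by (intro measurable_cross) measurable
  have r_eq: "r \<omega> = cross z k \<omega> (noise k \<omega>) - cross_cut z k \<omega>" for \<omega>
    by (simp add: r_def cross_cut_eq)
  have "AE \<omega> in M. compensator z k \<omega> = - real_cond_exp M (F k) r \<omega>"
  proof -
    have "AE \<omega> in M. real_cond_exp M (F k) r \<omega>
        = real_cond_exp M (F k) (\<lambda>\<omega>. cross z k \<omega> (noise k \<omega>)) \<omega> - compensator z k \<omega>"
      unfolding r_eq[abs_def] compensator_def
      by (intro real_cond_exp_diff integrable_cross_noise integrable_cross_cut assms)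
    with cond_exp_cross_noise[OF assms, of k] show ?thesis by eventually_elim simp
  qed
  moreover have "AE \<omega> in M. \<bar>real_cond_exp M (F k) r \<omega>\<bar> \<le> nn_cond_exp M (F k) (\<lambda>\<omega>. ennreal \<bar>r \<omega>\<bar>) \<omega>"
    by (rule real_cond_exp_abs) measurable
  ultimately have "AE \<omega> in M. ennreal \<bar>compensator z k \<omega>\<bar> \<le> nn_cond_exp M (F k) (\<lambda>\<omega>. ennreal \<bar>r \<omega>\<bar>) \<omega>"
    by eventually_elim simp
  then have "(\<integral>\<^sup>+\<omega>. \<bar>compensator z k \<omega>\<bar> \<partial>M) \<le> (\<integral>\<^sup>+\<omega>. nn_cond_exp M (F k) (\<lambda>\<omega>. ennreal \<bar>r \<omega>\<bar>) \<omega> \<partial>M)"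
    by (rule nn_integral_mono_AE)
  also have "\<dots> = (\<integral>\<^sup>+\<omega>. \<bar>r \<omega>\<bar> \<partial>M)"
    using nn_cond_exp_intg[of "\<lambda>_. 1" "\<lambda>\<omega>. ennreal \<bar>r \<omega>\<bar>"] by simp
  also have "\<dots> \<le> (\<integral>\<^sup>+\<omega>. ennreal growth_bound * rel_noise z k \<omega> \<partial>M)"
    using abs_cross_remainder_le[OF assms] growth_bound_ge_1 rel_noise_nonneg
    by (intro nn_integral_mono) (simp add: r_def ennreal_mult[symmetric])
  also have "\<dots> = ennreal growth_bound * (\<integral>\<^sup>+\<omega>. rel_noise z k \<omega> \<partial>M)"
    by (rule nn_integral_cmult) measurable
  also have "\<dots> \<le> ennreal growth_bound * ennreal (\<alpha> k powr p * moment_const z)"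
    by (intro mult_left_mono nn_integral_rel_noise_le) auto
  also have "\<dots> = ennreal (growth_bound * (\<alpha> k powr p * moment_const z))"
    using growth_bound_ge_1 moment_const_nonneg by (intro ennreal_mult[symmetric]) auto
  finally show ?thesis .
qed

lemma AE_summable_abs_compensator:
  assumes "H z = z"
  shows "AE \<omega> in M. summable (\<lambda>k. \<bar>compensator z k \<omega>\<bar>)"
  using step_powr_summable moment_const_nonneg growth_bound_ge_1
  by (intro AE_summable_if_nn_integral_le[OF _ _ nn_integral_abs_compensator_le[OF assms]])
    (auto intro: summable_mult summable_mult2)

definition centered :: "real^'d \<Rightarrow> nat \<Rightarrow> 'a \<Rightarrow> real" where
  "centered z k \<omega> = cross_cut z k \<omega> - compensator z k \<omega>"

lemma abs_centered_le:
  assumes "H z = z"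
  shows "AE \<omega> in M. \<bar>centered z k \<omega>\<bar> \<le> 2 * growth_bound"
  using abs_compensator_le[OF assms, of k]
proof eventually_elim
  case (elim \<omega>)
  then show ?case using abs_cross_cut_le[OF assms, of k \<omega>] by (simp add: centered_def)
qed

lemma integral_mult_centered_eq_0:
  assumes "H z = z" and g_F: "g \<in> borel_measurable (F k)"
    and g_bound: "\<And>\<omega>. \<omega> \<in> space M \<Longrightarrow> \<bar>g \<omega>\<bar> \<le> c"
  shows "(\<integral>\<omega>. g \<omega> * centered z k \<omega> \<partial>M) = 0"
proof -
  interpret sigma_finite_subalgebra M "F k" by (rule sigma_finite_subalgebra_F)
  have [measurable]: "g \<in> borel_measurable M" using g_F by (rule measurable_from_F)
  have gd_int: "integrable M (\<lambda>\<omega>. g \<omega> * cross_cut z k \<omega>)"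
  proof (rule integrable_const_bound[where B = "c * growth_bound"])
    show "AE \<omega> in M. norm (g \<omega> * cross_cut z k \<omega>) \<le> c * growth_bound"
      using g_bound abs_cross_cut_le[OF assms(1)]
      by (auto intro!: AE_I2 simp: abs_mult intro: mult_mono order_trans[OF abs_ge_zero])
  qed measurable
  note cond = real_cond_exp_intg[OF gd_int g_F, folded compensator_def]
  have "(\<integral>\<omega>. g \<omega> * centered z k \<omega> \<partial>M)
      = (\<integral>\<omega>. g \<omega> * cross_cut z k \<omega> \<partial>M) - (\<integral>\<omega>. g \<omega> * compensator z k \<omega> \<partial>M)"
    using gd_int cond(1) by (simp add: centered_def right_diff_distrib)
  then show ?thesis using cond(2) by simp
qed

lemma martingale_differences_centered:
  assumes "H z = z"
  shows "martingale_differences M F (centered z)"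
proof unfold_locales
  fix j k :: nat assume "j < k"
  then have [measurable]: "cross_cut z j \<in> borel_measurable (F k)"
    by (intro measurable_F_mono[OF measurable_cross_cut[OF x_Suc_measurable_F w_measurable_F]]) simp
  have [measurable]: "compensator z j \<in> borel_measurable (F k)"
    using \<open>j < k\<close> by (intro measurable_F_mono[OF compensator_measurable_F]) simp
  show "centered z j \<in> borel_measurable (F k)"
    unfolding centered_def[abs_def] by measurable
next
  fix k
  show "integrable M (\<lambda>\<omega>. (centered z k \<omega>)\<^sup>2)"
  proof (rule integrable_const_bound[where B = "(2 * growth_bound)\<^sup>2"])
    show "AE \<omega> in M. norm ((centered z k \<omega>)\<^sup>2) \<le> (2 * growth_bound)\<^sup>2"
      using abs_centered_le[OF assms, of k]
    proof eventually_elim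
      case (elim \<omega>)
      then have "(centered z k \<omega>)\<^sup>2 \<le> (2 * growth_bound)\<^sup>2"
        using growth_bound_ge_1 by (intro power2_le_iff_abs_le[THEN iffD2]) auto
      then show ?case by simp
    qed
  qed (simp add: centered_def[abs_def])
next
  fix k and g :: "'a \<Rightarrow> real" and c :: real
  assume "g \<in> borel_measurable (F k)" and "\<And>\<omega>. \<omega> \<in> space M \<Longrightarrow> \<bar>g \<omega>\<bar> \<le> c"
  then show "(\<integral>\<omega>. g \<omega> * centered z k \<omega> \<partial>M) = 0"
    by (rule integral_mult_centered_eq_0[OF assms])
qed (rule subalgebra_F)

lemma centered_power2_le:
  assumes "H z = z"
  shows "AE \<omega> in M. (centered z k \<omega>)\<^sup>2
    \<le> 2 * growth_bound\<^sup>2 * rel_noise z k \<omega> + 2 * growth_bound * \<bar>compensator z k \<omega>\<bar>"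
  using abs_compensator_le[OF assms, of k]
proof eventually_elim
  case (elim \<omega>)
  have "(centered z k \<omega>)\<^sup>2 + (cross_cut z k \<omega> + compensator z k \<omega>)\<^sup>2
      = 2 * (cross_cut z k \<omega>)\<^sup>2 + 2 * (compensator z k \<omega>)\<^sup>2"
    unfolding centered_def by (simp add: power2_diff power2_sum)
  then have "(centered z k \<omega>)\<^sup>2 \<le> 2 * (cross_cut z k \<omega>)\<^sup>2 + 2 * (compensator z k \<omega>)\<^sup>2"
    using zero_le_power2[of "cross_cut z k \<omega> + compensator z k \<omega>"] by linarith
  moreover have "(compensator z k \<omega>)\<^sup>2 \<le> growth_bound * \<bar>compensator z k \<omega>\<bar>"
    using elim mult_right_mono[of "\<bar>compensator z k \<omega>\<bar>" growth_bound "\<bar>compensator z k \<omega>\<bar>"]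
    by (simp add: power2_eq_square)
  ultimately show ?case
    using cross_cut_power2_le[OF assms, of k \<omega>] by simp
qed

lemma integral_centered_power2_le:
  assumes "H z = z"
  shows "(\<integral>\<omega>. (centered z k \<omega>)\<^sup>2 \<partial>M) \<le> 4 * growth_bound\<^sup>2 * moment_const z * \<alpha> k powr p"
proof -
  define G where "G = growth_bound"
  define c where "c = \<alpha> k powr p * moment_const z"
  have G: "1 \<le> G" and c: "0 \<le> c"
    using growth_bound_ge_1 moment_const_nonneg by (simp_all add: G_def c_def)
  have "AE \<omega> in M. ennreal ((centered z k \<omega>)\<^sup>2)
      \<le> ennreal (2 * G\<^sup>2) * rel_noise z k \<omega> + ennreal (2 * G) * \<bar>compensator z k \<omega>\<bar>"
    using centered_power2_le[OF assms, of k]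
    by eventually_elim (use G rel_noise_nonneg in \<open>auto simp: G_def ennreal_mult[symmetric]
        ennreal_plus[symmetric] simp del: ennreal_plus intro!: ennreal_leI\<close>)
  then have "(\<integral>\<^sup>+\<omega>. (centered z k \<omega>)\<^sup>2 \<partial>M)
      \<le> (\<integral>\<^sup>+\<omega>. ennreal (2 * G\<^sup>2) * rel_noise z k \<omega> + ennreal (2 * G) * \<bar>compensator z k \<omega>\<bar> \<partial>M)"
    by (rule nn_integral_mono_AE)
  also have "\<dots> = ennreal (2 * G\<^sup>2) * (\<integral>\<^sup>+\<omega>. rel_noise z k \<omega> \<partial>M)
      + ennreal (2 * G) * (\<integral>\<^sup>+\<omega>. \<bar>compensator z k \<omega>\<bar> \<partial>M)"
    by (simp add: nn_integral_add nn_integral_cmult)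
  also have "\<dots> \<le> ennreal (2 * G\<^sup>2) * ennreal c + ennreal (2 * G) * ennreal (G * c)"
    using nn_integral_rel_noise_le nn_integral_abs_compensator_le[OF assms]
    by (intro add_mono mult_left_mono) (auto simp: G_def c_def)
  also have "\<dots> = ennreal (4 * G\<^sup>2 * c)"
    using G c by (simp add: ennreal_mult[symmetric] ennreal_plus[symmetric] power2_eq_square
        algebra_simps del: ennreal_plus)
  finally have "enn2real (\<integral>\<^sup>+\<omega>. (centered z k \<omega>)\<^sup>2 \<partial>M) \<le> 4 * G\<^sup>2 * c"
    using c by (intro enn2real_leI) auto
  moreover have "(\<integral>\<omega>. (centered z k \<omega>)\<^sup>2 \<partial>M) = enn2real (\<integral>\<^sup>+\<omega>. (centered z k \<omega>)\<^sup>2 \<partial>M)"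
    by (rule integral_eq_nn_integral) (auto simp: centered_def)
  ultimately show ?thesis by (simp add: G_def c_def mult_ac)
qed

lemma AE_convergent_cross_cut_sums:
  assumes "H z = z"
  shows "AE \<omega> in M. convergent (\<lambda>n. \<Sum>k<n. cross_cut z k \<omega>)"
proof -
  interpret martingale_differences M F "centered z"
    by (rule martingale_differences_centered[OF assms])
  have "summable (\<lambda>k. \<integral>\<omega>. (centered z k \<omega>)\<^sup>2 \<partial>M)"
  proof (rule summable_comparison_test)
    show "summable (\<lambda>k. 4 * growth_bound\<^sup>2 * moment_const z * \<alpha> k powr p)"
      by (intro summable_mult step_powr_summable)
    show "\<exists>N. \<forall>k\<ge>N. norm (\<integral>\<omega>. (centered z k \<omega>)\<^sup>2 \<partial>M)
        \<le> 4 * growth_bound\<^sup>2 * moment_const z * \<alpha> k powr p"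
      using integral_centered_power2_le[OF assms] by simp
  qed
  then have "AE \<omega> in M. convergent (\<lambda>n. \<Sum>k<n. centered z k \<omega>)"
    by (rule AE_convergent_partial_sum)
  then show ?thesis
    using AE_summable_abs_compensator[OF assms]
  proof eventually_elim
    case (elim \<omega>)
    from elim(2) have "summable (\<lambda>k. compensator z k \<omega>)" by (rule summable_rabs_cancel)
    then have "convergent (\<lambda>n. \<Sum>k<n. compensator z k \<omega>)"
      by (simp add: summable_iff_convergent)
    with elim(1) have "convergent (\<lambda>n. (\<Sum>k<n. centered z k \<omega>) + (\<Sum>k<n. compensator z k \<omega>))"
      by (rule convergent_add)
    then show ?case by (simp add: centered_def sum.distrib[symmetric])
  qed
qed

lemma step_tendsto_zero: "\<alpha> \<longlonglongrightarrow> 0"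
proof -
  have "(\<lambda>k. \<alpha> k powr p) \<longlonglongrightarrow> 0" by (rule summable_LIMSEQ_zero[OF step_powr_summable])
  then have "(\<lambda>k. (\<alpha> k powr p) powr (1 / p)) \<longlonglongrightarrow> 0"
    by (rule tendsto_zero_powrI) (use p_gt_1 in auto)
  moreover have "(\<alpha> k powr p) powr (1 / p) = \<alpha> k" for k
    using p_gt_1 step_pos[of k] by (simp add: powr_powr)
  ultimately show ?thesis by simp
qed

lemma AE_dist_convergent:
  assumes "H z = z"
  shows "AE \<omega> in M. convergent (\<lambda>k. norm (x k \<omega> - z))
    \<and> summable (\<lambda>k. \<alpha> k * (norm (x k \<omega> - H (x k \<omega>)))\<^sup>2)"
  using AE_summable_rel_noise[of z] AE_convergent_cross_cut_sums[OF assms] AE_space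
proof eventually_elim
  case (elim \<omega>)
  have "norm (H (x k \<omega>) - z) \<le> norm (x k \<omega> - z)" for k
    using nonexpansive[of "x k \<omega>" z] assms by simp
  moreover have "x (Suc k) \<omega> = x k \<omega> + \<alpha> k *\<^sub>R (H (x k \<omega>) - x k \<omega>) + noise k \<omega>" for k
    using iteration[OF elim(3)] by (simp add: noise_def scaleR_add_right)
  ultimately show ?case
    using perturbed_km_convergent[where xs = "\<lambda>k. x k \<omega>" and W = "\<lambda>k. noise k \<omega>" and H = H
        and z = z and \<alpha> = \<alpha> and p = p and L = growth_bound]
      step_pos one_plus_step_le_growth_bound step_tendsto_zero p_gt_1 p_le_2 elim(1,2)
    by (simp add: rel_noise_def cross_cut_def cross_def averaged_def bracket_def)
qed

theorem AE_convergent_to_fixpoint: "AE \<omega> in M. \<exists>y. H y = y \<and> (\<lambda>k. x k \<omega>) \<longlonglongrightarrow> y"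
proof -
  obtain Z where Z: "countable Z" "Z \<subseteq> {y. H y = y}" "{y. H y = y} \<subseteq> closure Z"
    using separable by blast
  have "Z \<noteq> {}" using Z(3) xbar_fixed by auto
  have "AE \<omega> in M. \<forall>z\<in>Z. convergent (\<lambda>k. norm (x k \<omega> - z))
      \<and> summable (\<lambda>k. \<alpha> k * (norm (x k \<omega> - H (x k \<omega>)))\<^sup>2)"
    using Z(1,2) by (intro AE_ball_countable'[OF AE_dist_convergent]) auto
  then show ?thesis
  proof eventually_elim
    case (elim \<omega>)
    show ?case
    proof (rule opial_convergent[OF continuous_on_H Z(3) \<open>Z \<noteq> {}\<close>])
      show "convergent (\<lambda>k. dist (x k \<omega>) z)" if "z \<in> Z" for z
        using elim that by (simp add: dist_norm)
      show "\<exists>\<^sub>F k in sequentially. dist (x k \<omega>) (H (x k \<omega>)) < e" if "0 < e" for e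
      proof -
        have "\<exists>\<^sub>F k in sequentially. (dist (x k \<omega>) (H (x k \<omega>)))\<^sup>2 < e\<^sup>2"
          using elim \<open>Z \<noteq> {}\<close> step_pos step_not_summable that
          by (intro frequently_less_if_weighted_summable) (auto simp: dist_norm less_imp_le)
        then show ?thesis
          by (rule frequently_elim1) (use that in \<open>simp add: power_less_imp_less_base\<close>)
      qed
    qed
  qed
qed

end

theorem theorem3:
  fixes M :: "'a measure"
    and H :: "real^'d \<Rightarrow> real^'d"
    and x w :: "nat \<Rightarrow> 'a \<Rightarrow> real^'d"
    and \<alpha> :: "nat \<Rightarrow> real"
    and p A B :: real
    and xbar :: "real^'d"
  assumes "prob_space M"
    and "1 < p" and "p \<le> 2"
    and nonexp: "\<And>u v. norm (H u - H v) \<le> norm (u - v)"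
    and "{z. H z = z} \<noteq> {}" and "bounded {z. H z = z}"
    and x0_meas: "x 0 \<in> borel_measurable M"
    and w_int: "\<And>k. integrable M (w k)"
    and iter: "\<And>k \<omega>. \<omega> \<in> space M \<Longrightarrow>
                 x (Suc k) \<omega> = x k \<omega> + \<alpha> k *\<^sub>R (H (x k \<omega>) - x k \<omega> + w k \<omega>)"
    and mart: "\<And>k i. AE \<omega> in M.
                 real_cond_exp M (nat_filtration M x k) (\<lambda>\<eta>. w k \<eta> $ i) \<omega> = 0"
    and "H xbar = xbar" and "A > 0" and "B \<ge> 0"
    and moment: "\<And>k. AE \<omega> in M.
                 nn_cond_exp M (nat_filtration M x k) (\<lambda>\<eta>. ennreal (norm (w k \<eta>) powr p)) \<omega>
                   \<le> ennreal (A + B * norm (x k \<omega> - xbar) powr p)"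
    and "\<And>k. \<alpha> k > 0" and "decseq \<alpha>"
    and "\<not> summable \<alpha>"
    and "summable (\<lambda>k. \<alpha> k powr p)"
  shows "AE \<omega> in M. \<exists>z. H z = z \<and> (\<lambda>k. x k \<omega>) \<longlonglongrightarrow> z"
proof -
  interpret stochastic_km M H x w \<alpha> p A B xbar
    by (intro stochastic_km.intro stochastic_km_axioms.intro) (fact assms)+
  show ?thesis by (rule AE_convergent_to_fixpoint)
qed

end
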